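(* Let $(x_0,v_0)\in\mathbb R^3_0\times\mathbb R^3$ lie on a non-degenerate elliptic Keplerian orbit, i.e. $L_0:=L(x_0,v_0)\neq0$ and $A_0:=A(x_0,v_0)$ satisfies $|A_0|<\mu$. For any $c$ with $0<c<\min\{k_1|L_0|^2/2,\ k_2(\mu-|A_0|)^2/2\}$, every trajectory of $$\dot x = v - k_1 v\times\Delta L - k_2\Big(v\times(\Delta A\times v)-\tfrac{\mu}{|x|}\Delta A+\tfrac{\mu}{|x|^3}xx^T\Delta A\Big),$$ $$\dot v = -\mu\tfrac{x}{|x|^3} - k_1\Delta L\times x - k_2\big((x\times v)\times\Delta A + x\times(v\times\Delta A)\big),$$ with $\Delta L=L(x,v)-L_0$, $\Delta A=A(x,v)-A_0$, starting in $V^{-1}([0,c])$ stays in $V^{-1}([0,c])$ for all $t\ge0$ and converges as $t\to\infty$ to $V^{-1}(0)=\{(x,v): L(x,v)=L_0,\ A(x,v)=A_0\}$. Furthermore $V^{-1}(0)$ is invariant under both this system and the Kepler system $\dot x=v$, $\dot v=-\mu x/|x|^3$.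
   Context: $\mathbb R^3_0=\mathbb R^3\setminus\{0\}$, $\mu>0$, $k_1,k_2>0$. $L(x,v)=x\times v$, $A(x,v)=v\times(x\times v)-\mu x/|x|$ (note $L\perp A$ always). $V(x,v)=\tfrac{k_1}{2}|L(x,v)-L_0|^2+\tfrac{k_2}{2}|A(x,v)-A_0|^2$ on $\mathbb R^3_0\times\mathbb R^3$. *)

theory Defs
  imports "HOL-Analysis.Analysis" "HOL-Analysis.Cross3"
begin

type_synonym vec3 = "real ^ 3"

definition angmom :: "vec3 \<Rightarrow> vec3 \<Rightarrow> vec3" where
  "angmom x v = cross3 x v"

definition lrl :: "real \<Rightarrow> vec3 \<Rightarrow> vec3 \<Rightarrow> vec3" where
  "lrl \<mu> x v = cross3 v (cross3 x v) - (\<mu> / norm x) *\<^sub>R x"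

definition lyapV :: "real \<Rightarrow> real \<Rightarrow> real \<Rightarrow> vec3 \<Rightarrow> vec3 \<Rightarrow> vec3 \<Rightarrow> vec3 \<Rightarrow> real" where
  "lyapV \<mu> k1 k2 L0 A0 x v =
     k1 / 2 * (norm (angmom x v - L0))\<^sup>2 + k2 / 2 * (norm (lrl \<mu> x v - A0))\<^sup>2"

text \<open>Right-hand side of the controlled system (x-component and v-component).
  The term x x^T dA is written as (x . dA) x.\<close>
definition ctrl_x :: "real \<Rightarrow> real \<Rightarrow> real \<Rightarrow> vec3 \<Rightarrow> vec3 \<Rightarrow> vec3 \<Rightarrow> vec3 \<Rightarrow> vec3" where
  "ctrl_x \<mu> k1 k2 L0 A0 x v =
     (let dL = angmom x v - L0; dA = lrl \<mu> x v - A0 in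
      v - k1 *\<^sub>R cross3 v dL
        - k2 *\<^sub>R (cross3 v (cross3 dA v) - (\<mu> / norm x) *\<^sub>R dA
                   + (\<mu> / norm x ^ 3) *\<^sub>R ((x \<bullet> dA) *\<^sub>R x)))"

definition ctrl_v :: "real \<Rightarrow> real \<Rightarrow> real \<Rightarrow> vec3 \<Rightarrow> vec3 \<Rightarrow> vec3 \<Rightarrow> vec3 \<Rightarrow> vec3" where
  "ctrl_v \<mu> k1 k2 L0 A0 x v =
     (let dL = angmom x v - L0; dA = lrl \<mu> x v - A0 in
      - (\<mu> / norm x ^ 3) *\<^sub>R x - k1 *\<^sub>R cross3 dL x
        - k2 *\<^sub>R (cross3 (cross3 x v) dA + cross3 x (cross3 v dA)))"

definition ctrl_sol :: "real \<Rightarrow> real \<Rightarrow> real \<Rightarrow> vec3 \<Rightarrow> vec3 \<Rightarrow> real set \<Rightarrow> (real \<Rightarrow> vec3) \<Rightarrow> (real \<Rightarrow> vec3) \<Rightarrow> bool" where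
  "ctrl_sol \<mu> k1 k2 L0 A0 I x v \<longleftrightarrow>
     (\<forall>t\<in>I. x t \<noteq> 0
        \<and> (x has_vector_derivative ctrl_x \<mu> k1 k2 L0 A0 (x t) (v t)) (at t within I)
        \<and> (v has_vector_derivative ctrl_v \<mu> k1 k2 L0 A0 (x t) (v t)) (at t within I))"

definition kepler_sol :: "real \<Rightarrow> real set \<Rightarrow> (real \<Rightarrow> vec3) \<Rightarrow> (real \<Rightarrow> vec3) \<Rightarrow> bool" where
  "kepler_sol \<mu> I x v \<longleftrightarrow>
     (\<forall>t\<in>I. x t \<noteq> 0
        \<and> (x has_vector_derivative v t) (at t within I)
        \<and> (v has_vector_derivative (- (\<mu> / norm (x t) ^ 3) *\<^sub>R x t)) (at t within I))"

definition target_set :: "real \<Rightarrow> vec3 \<Rightarrow> vec3 \<Rightarrow> (vec3 \<times> vec3) set" where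
  "target_set \<mu> L0 A0 = {(x, v). x \<noteq> 0 \<and> angmom x v = L0 \<and> lrl \<mu> x v = A0}"

end

theory Submission
  imports Defs
begin

text \<open>\<open>L\<close> and \<open>A\<close> are first integrals of the Kepler flow and the controlled field is the Kepler
  field minus \<open>\<nabla>V\<close>, so \<open>V\<close> decreases along trajectories at the rate \<open>|\<nabla>V|\<^sup>2\<close>. For \<open>c\<close> below the
  given bound the sublevel set \<open>V \<le> c\<close> is compact and avoids \<open>x = 0\<close> and \<open>L = 0\<close> (the bounds
  on \<open>|L|\<close> and \<open>|A|\<close> confine \<open>|x|\<close> and \<open>|v|\<close>); hence trajectories exist for all time and stay in
  it. The only critical points of \<open>V\<close> with \<open>L \<noteq> 0\<close> are its zeros: differentiating \<open>V\<close> along the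
  scaling and rotation symmetries and along \<open>x\<close>, \<open>v\<close> forces \<open>\<Delta>L = \<Delta>A = 0\<close> because \<open>L0 \<perp> A0\<close>.
  Barbalat's lemma gives \<open>|\<nabla>V| \<longrightarrow> 0\<close>, and compactness turns this into convergence to \<open>V\<^sup>-\<^sup>1(0)\<close>.\<close>

unbundle cross3_syntax

lemma bounded_bilinear_cross3: "bounded_bilinear cross3"
  using bilinear_conv_bounded_bilinear bilinear_cross by blast

lemma has_vector_derivative_cross3:
  assumes "(f has_vector_derivative f') (at t within I)" "(g has_vector_derivative g') (at t within I)"
  shows "((\<lambda>s. f s \<times> g s) has_vector_derivative (f t \<times> g' + f' \<times> g t)) (at t within I)"
  using bounded_bilinear.has_vector_derivative[OF bounded_bilinear_cross3 assms] .

lemma has_real_derivative_norm: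
  fixes f :: "real \<Rightarrow> 'a::real_inner"
  assumes "(f has_vector_derivative f') (at t within I)" "f t \<noteq> 0"
  shows "((\<lambda>s. norm (f s)) has_real_derivative (f t \<bullet> f' / norm (f t))) (at t within I)"
proof -
  have "((\<lambda>s. norm (f s)) has_derivative (\<lambda>h. (h *\<^sub>R f') \<bullet> sgn (f t))) (at t within I)"
    using has_derivative_compose[OF assms(1)[unfolded has_vector_derivative_def]
        has_derivative_norm[OF assms(2)]]
    by (simp add: o_def)
  then show ?thesis
    unfolding has_real_derivative_iff_has_vector_derivative has_vector_derivative_def
    by (simp add: sgn_div_norm inner_commute mult.commute divide_inverse mult.left_commute)
qed

lemma has_real_derivative_power2_norm:
  fixes f :: "real \<Rightarrow> 'a::real_inner"
  assumes "(f has_vector_derivative f') (at t within I)"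
  shows "((\<lambda>s. (norm (f s))\<^sup>2) has_real_derivative (2 * (f t \<bullet> f'))) (at t within I)"
  using bounded_bilinear.has_vector_derivative[OF bounded_bilinear_inner assms assms]
  by (simp add: has_real_derivative_iff_has_vector_derivative power2_norm_eq_inner inner_commute)

lemma has_vector_derivative_zero_imp_constant_on_interval:
  fixes g :: "real \<Rightarrow> 'b::real_normed_vector"
  assumes "is_interval I" "\<And>t. t \<in> I \<Longrightarrow> (g has_vector_derivative 0) (at t within I)"
    and "a \<in> I" "b \<in> I"
  shows "g b = g a"
proof -
  have "\<exists>c. \<forall>x\<in>I. g x = c"
    using assms(1,2) is_interval_convex
    by (intro has_derivative_zero_constant) (auto simp: has_vector_derivative_def)
  then show ?thesis using assms(3,4) by auto
qed

lemma has_real_derivative_nonpos_imp_antimono_on_interval: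
  fixes g :: "real \<Rightarrow> real"
  assumes I: "is_interval I" and g: "\<And>t. t \<in> I \<Longrightarrow> (g has_real_derivative g' t) (at t within I)"
    and nonpos: "\<And>t. t \<in> I \<Longrightarrow> g' t \<le> 0" and ab: "a \<in> I" "b \<in> I" "a \<le> b"
  shows "g b \<le> g a"
proof -
  have sub: "{a..b} \<subseteq> I"
    using I ab(1,2) unfolding is_interval_1 by (meson atLeastAtMost_iff subsetI)
  have "(g has_derivative (\<lambda>h. g' s * h)) (at s within {a..b})" if "a \<le> s" "s \<le> b" for s
    using has_field_derivative_subset[OF g sub] sub that by (auto simp: has_field_derivative_def)
  from mvt_very_simple[OF ab(3) this] obtain s where "s \<in> {a..b}" "g b - g a = g' s * (b - a)"
    by blast
  moreover have "g' s * (b - a) \<le> 0"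
    using nonpos[of s] sub \<open>s \<in> {a..b}\<close> ab(3) by (intro mult_nonpos_nonneg) auto
  ultimately show ?thesis by simp
qed

section \<open>Conserved quantities of the Kepler problem\<close>

definition lrl_deriv :: "real \<Rightarrow> vec3 \<Rightarrow> vec3 \<Rightarrow> vec3 \<Rightarrow> vec3 \<Rightarrow> vec3" where
  "lrl_deriv \<mu> x v hx hv = hv \<times> (x \<times> v) + v \<times> (hx \<times> v + x \<times> hv)
      - ((\<mu> / norm x) *\<^sub>R hx - (\<mu> * (x \<bullet> hx) / norm x ^ 3) *\<^sub>R x)"

lemma angmom_has_vector_derivative:
  assumes "(x has_vector_derivative x') (at t within I)" "(v has_vector_derivative v') (at t within I)"
  shows "((\<lambda>s. angmom (x s) (v s)) has_vector_derivative (x' \<times> v t + x t \<times> v')) (at t within I)"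
  unfolding angmom_def using has_vector_derivative_cross3[OF assms] by (simp add: add.commute)

lemma lrl_has_vector_derivative:
  assumes "(x has_vector_derivative x') (at t within I)" "(v has_vector_derivative v') (at t within I)"
    and "x t \<noteq> 0"
  shows "((\<lambda>s. lrl \<mu> (x s) (v s)) has_vector_derivative lrl_deriv \<mu> (x t) (v t) x' v') (at t within I)"
proof -
  have nz: "norm (x t) \<noteq> 0" using assms(3) by simp
  have "((\<lambda>s. \<mu> / norm (x s)) has_real_derivative (- \<mu> * (x t \<bullet> x') / norm (x t) ^ 3)) (at t within I)"
    using DERIV_cdivide[OF DERIV_inverse_fun[OF has_real_derivative_norm[OF assms(1,3)] nz], of "1/\<mu>"]
      nz
    by (auto simp: divide_simps power2_eq_square power3_eq_cube elim!: DERIV_cong)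
  from has_vector_derivative_diff[OF
      has_vector_derivative_cross3[OF assms(2) has_vector_derivative_cross3[OF assms(1,2)]]
      has_vector_derivative_scaleR[OF this assms(1)]]
  show ?thesis
    unfolding lrl_def by (rule has_vector_derivative_eq_rhs) (simp add: lrl_deriv_def algebra_simps)
qed

lemma lrl_deriv_kepler_field:
  assumes "x \<noteq> 0"
  shows "lrl_deriv \<mu> x v v (- (\<mu> / norm x ^ 3) *\<^sub>R x) = 0"
proof -
  have xxv: "x \<times> (x \<times> v) = (x \<bullet> v) *\<^sub>R x - (norm x)\<^sup>2 *\<^sub>R v"
    using Lagrange[of x x v] by (simp add: power2_norm_eq_inner)
  have "lrl_deriv \<mu> x v v (- (\<mu> / norm x ^ 3) *\<^sub>R x) =
      (- (\<mu> / norm x ^ 3)) *\<^sub>R (x \<times> (x \<times> v))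
      - ((\<mu> / norm x) *\<^sub>R v - (\<mu> * (x \<bullet> v) / norm x ^ 3) *\<^sub>R x)"
    unfolding lrl_deriv_def by (simp add: cross_mult_left cross_mult_right cross_skew[of x "x \<times> v"])
  also have "\<dots> = 0"
    unfolding xxv using assms by (simp add: field_simps power2_eq_square power3_eq_cube)
  finally show ?thesis .
qed

lemma kepler_sol_conserves_angmom_lrl:
  assumes I: "is_interval I" and sol: "kepler_sol \<mu> I x v" and st: "s \<in> I" "t \<in> I"
  shows "angmom (x t) (v t) = angmom (x s) (v s)" "lrl \<mu> (x t) (v t) = lrl \<mu> (x s) (v s)"
proof -
  have field: "x r \<noteq> 0" "(x has_vector_derivative v r) (at r within I)"
      "(v has_vector_derivative (- (\<mu> / norm (x r) ^ 3) *\<^sub>R x r)) (at r within I)" if "r \<in> I" for r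
    using sol that unfolding kepler_sol_def by blast+
  have L': "((\<lambda>s. angmom (x s) (v s)) has_vector_derivative 0) (at r within I)" if "r \<in> I" for r
    using angmom_has_vector_derivative[OF field(2,3)[OF that]] by (simp add: cross_mult_right)
  show "angmom (x t) (v t) = angmom (x s) (v s)"
    by (rule has_vector_derivative_zero_imp_constant_on_interval[OF I L' st])
  have A': "((\<lambda>s. lrl \<mu> (x s) (v s)) has_vector_derivative 0) (at r within I)" if "r \<in> I" for r
    using lrl_has_vector_derivative[OF field(2,3,1)[OF that], of \<mu>]
      lrl_deriv_kepler_field[OF field(1)[OF that], of \<mu> "v r"]
    by simp
  show "lrl \<mu> (x t) (v t) = lrl \<mu> (x s) (v s)"
    by (rule has_vector_derivative_zero_imp_constant_on_interval[OF I A' st])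
qed

lemma kepler_sol_target_set_invariant:
  assumes "is_interval I" "0 \<in> I" "kepler_sol \<mu> I x v" "(x 0, v 0) \<in> target_set \<mu> L0 A0" "t \<in> I"
  shows "(x t, v t) \<in> target_set \<mu> L0 A0"
  using kepler_sol_conserves_angmom_lrl[OF assms(1,3,2,5)] assms(3-5)
  by (simp add: target_set_def kepler_sol_def)


section \<open>The Lyapunov function\<close>

definition lyapV_deriv ::
  "real \<Rightarrow> real \<Rightarrow> real \<Rightarrow> vec3 \<Rightarrow> vec3 \<Rightarrow> vec3 \<Rightarrow> vec3 \<Rightarrow> vec3 \<Rightarrow> vec3 \<Rightarrow> real" where
  "lyapV_deriv \<mu> k1 k2 L0 A0 x v hx hv =
     k1 * ((angmom x v - L0) \<bullet> (hx \<times> v + x \<times> hv))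
     + k2 * ((lrl \<mu> x v - A0) \<bullet> lrl_deriv \<mu> x v hx hv)"

definition lyapV_grad_x :: "real \<Rightarrow> real \<Rightarrow> real \<Rightarrow> vec3 \<Rightarrow> vec3 \<Rightarrow> vec3 \<Rightarrow> vec3 \<Rightarrow> vec3" where
  "lyapV_grad_x \<mu> k1 k2 L0 A0 x v =
     (let dL = angmom x v - L0; dA = lrl \<mu> x v - A0 in
      k1 *\<^sub>R (v \<times> dL)
        + k2 *\<^sub>R (v \<times> (dA \<times> v) - (\<mu> / norm x) *\<^sub>R dA + (\<mu> / norm x ^ 3) *\<^sub>R ((x \<bullet> dA) *\<^sub>R x)))"

definition lyapV_grad_v :: "real \<Rightarrow> real \<Rightarrow> real \<Rightarrow> vec3 \<Rightarrow> vec3 \<Rightarrow> vec3 \<Rightarrow> vec3 \<Rightarrow> vec3" where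
  "lyapV_grad_v \<mu> k1 k2 L0 A0 x v =
     (let dL = angmom x v - L0; dA = lrl \<mu> x v - A0 in
      k1 *\<^sub>R (dL \<times> x) + k2 *\<^sub>R ((x \<times> v) \<times> dA + x \<times> (v \<times> dA)))"

definition lyapV_grad_sqnorm :: "real \<Rightarrow> real \<Rightarrow> real \<Rightarrow> vec3 \<Rightarrow> vec3 \<Rightarrow> vec3 \<Rightarrow> vec3 \<Rightarrow> real" where
  "lyapV_grad_sqnorm \<mu> k1 k2 L0 A0 x v =
     (norm (lyapV_grad_x \<mu> k1 k2 L0 A0 x v))\<^sup>2 + (norm (lyapV_grad_v \<mu> k1 k2 L0 A0 x v))\<^sup>2"

lemma lyapV_has_real_derivative:
  assumes "(x has_vector_derivative x') (at t within I)" "(v has_vector_derivative v') (at t within I)"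
    and "x t \<noteq> 0"
  shows "((\<lambda>s. lyapV \<mu> k1 k2 L0 A0 (x s) (v s)) has_real_derivative
           lyapV_deriv \<mu> k1 k2 L0 A0 (x t) (v t) x' v') (at t within I)"
proof -
  have dL: "((\<lambda>s. angmom (x s) (v s) - L0) has_vector_derivative (x' \<times> v t + x t \<times> v'))
      (at t within I)"
    using angmom_has_vector_derivative[OF assms(1,2)] by (simp add: has_vector_derivative_diff_const)
  have dA: "((\<lambda>s. lrl \<mu> (x s) (v s) - A0) has_vector_derivative lrl_deriv \<mu> (x t) (v t) x' v')
      (at t within I)"
    using lrl_has_vector_derivative[OF assms] by (simp add: has_vector_derivative_diff_const)
  from DERIV_add[OF DERIV_cmult[OF has_real_derivative_power2_norm[OF dL]]
                    DERIV_cmult[OF has_real_derivative_power2_norm[OF dA]]]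
  show ?thesis
    unfolding lyapV_def by (rule DERIV_cong) (simp add: lyapV_deriv_def)
qed

lemma lyapV_deriv_eq_grad:
  "lyapV_deriv \<mu> k1 k2 L0 A0 x v hx hv =
     lyapV_grad_x \<mu> k1 k2 L0 A0 x v \<bullet> hx + lyapV_grad_v \<mu> k1 k2 L0 A0 x v \<bullet> hv"
proof -
  define dL where "dL = angmom x v - L0"
  define dA where "dA = lrl \<mu> x v - A0"
  have triple: "d \<bullet> (h \<times> a) = h \<bullet> (a \<times> d)" "d \<bullet> (a \<times> h) = h \<bullet> (d \<times> a)"
      "d \<bullet> (a \<times> (h \<times> a)) = h \<bullet> (a \<times> (d \<times> a))" "d \<bullet> (a \<times> (b \<times> h)) = h \<bullet> (b \<times> (a \<times> d))"
    for a b d h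
    by (simp_all add: cross3_simps)
  have "lyapV_deriv \<mu> k1 k2 L0 A0 x v hx hv = k1 * (hx \<bullet> (v \<times> dL) + hv \<bullet> (dL \<times> x))
     + k2 * (hv \<bullet> ((x \<times> v) \<times> dA) + hx \<bullet> (v \<times> (dA \<times> v)) + hv \<bullet> (x \<times> (v \<times> dA))
       - ((\<mu> / norm x) * (hx \<bullet> dA) - (\<mu> * (x \<bullet> hx) / norm x ^ 3) * (x \<bullet> dA)))"
    unfolding lyapV_deriv_def lrl_deriv_def dL_def[symmetric] dA_def[symmetric]
    by (simp add: inner_add_right inner_diff_right triple inner_commute cross_add_right cross_add_left)
  also have "\<dots> = lyapV_grad_x \<mu> k1 k2 L0 A0 x v \<bullet> hx + lyapV_grad_v \<mu> k1 k2 L0 A0 x v \<bullet> hv"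
    unfolding lyapV_grad_x_def lyapV_grad_v_def Let_def dL_def[symmetric] dA_def[symmetric]
    by (simp add: algebra_simps inner_commute)
  finally show ?thesis .
qed

lemma lyapV_deriv_ctrl:
  assumes "x \<noteq> 0"
  shows "lyapV_deriv \<mu> k1 k2 L0 A0 x v (ctrl_x \<mu> k1 k2 L0 A0 x v) (ctrl_v \<mu> k1 k2 L0 A0 x v) =
           - lyapV_grad_sqnorm \<mu> k1 k2 L0 A0 x v"
proof -
  have "ctrl_x \<mu> k1 k2 L0 A0 x v = v - lyapV_grad_x \<mu> k1 k2 L0 A0 x v"
    "ctrl_v \<mu> k1 k2 L0 A0 x v = - (\<mu> / norm x ^ 3) *\<^sub>R x - lyapV_grad_v \<mu> k1 k2 L0 A0 x v"
    by (simp_all add: ctrl_x_def ctrl_v_def lyapV_grad_x_def lyapV_grad_v_def Let_def algebra_simps)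
  moreover have "lyapV_deriv \<mu> k1 k2 L0 A0 x v v (- (\<mu> / norm x ^ 3) *\<^sub>R x) = 0"
    unfolding lyapV_deriv_def using lrl_deriv_kepler_field[OF assms] by (simp add: cross_mult_right)
  ultimately show ?thesis
    by (simp add: lyapV_deriv_eq_grad lyapV_grad_sqnorm_def inner_diff_right power2_norm_eq_inner)
qed

lemma lyapV_grad_sqnorm_nonneg: "lyapV_grad_sqnorm \<mu> k1 k2 L0 A0 x v \<ge> 0"
  by (simp add: lyapV_grad_sqnorm_def)

lemma ctrl_sol_lyapV_has_real_derivative:
  assumes "ctrl_sol \<mu> k1 k2 L0 A0 I x v" "t \<in> I"
  shows "((\<lambda>s. lyapV \<mu> k1 k2 L0 A0 (x s) (v s)) has_real_derivative
           - lyapV_grad_sqnorm \<mu> k1 k2 L0 A0 (x t) (v t)) (at t within I)"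
  using assms lyapV_has_real_derivative[of x _ t I v] lyapV_deriv_ctrl[of "x t"]
  unfolding ctrl_sol_def by metis

lemma ctrl_sol_lyapV_antimono:
  assumes "is_interval I" "ctrl_sol \<mu> k1 k2 L0 A0 I x v" "s \<in> I" "t \<in> I" "s \<le> t"
  shows "lyapV \<mu> k1 k2 L0 A0 (x t) (v t) \<le> lyapV \<mu> k1 k2 L0 A0 (x s) (v s)"
proof (rule has_real_derivative_nonpos_imp_antimono_on_interval[OF assms(1) _ _ assms(3-5)])
  show "((\<lambda>s. lyapV \<mu> k1 k2 L0 A0 (x s) (v s)) has_real_derivative
           - lyapV_grad_sqnorm \<mu> k1 k2 L0 A0 (x r) (v r)) (at r within I)" if "r \<in> I" for r
    by (rule ctrl_sol_lyapV_has_real_derivative[OF assms(2) that])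
qed (simp add: lyapV_grad_sqnorm_nonneg)

lemma lyapV_nonneg: "k1 \<ge> 0 \<Longrightarrow> k2 \<ge> 0 \<Longrightarrow> lyapV \<mu> k1 k2 L0 A0 x v \<ge> 0"
  by (simp add: lyapV_def)

lemma lyapV_eq_0_iff:
  assumes "k1 > 0" "k2 > 0"
  shows "lyapV \<mu> k1 k2 L0 A0 x v = 0 \<longleftrightarrow> angmom x v = L0 \<and> lrl \<mu> x v = A0"
proof -
  have "k1 / 2 * (norm (angmom x v - L0))\<^sup>2 \<ge> 0" "k2 / 2 * (norm (lrl \<mu> x v - A0))\<^sup>2 \<ge> 0"
    using assms by auto
  then have "lyapV \<mu> k1 k2 L0 A0 x v = 0 \<longleftrightarrow>
      k1 / 2 * (norm (angmom x v - L0))\<^sup>2 = 0 \<and> k2 / 2 * (norm (lrl \<mu> x v - A0))\<^sup>2 = 0"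
    unfolding lyapV_def by linarith
  then show ?thesis using assms by simp
qed

lemma ctrl_sol_target_set_invariant:
  assumes "k1 > 0" "k2 > 0" "is_interval I" "0 \<in> I" "I \<subseteq> {0..}" "ctrl_sol \<mu> k1 k2 L0 A0 I x v"
    and "(x 0, v 0) \<in> target_set \<mu> L0 A0" "t \<in> I"
  shows "(x t, v t) \<in> target_set \<mu> L0 A0"
proof -
  have "lyapV \<mu> k1 k2 L0 A0 (x t) (v t) \<le> lyapV \<mu> k1 k2 L0 A0 (x 0) (v 0)"
    using ctrl_sol_lyapV_antimono[OF assms(3,6,4,8)] assms(5,8) by auto
  moreover have "lyapV \<mu> k1 k2 L0 A0 (x 0) (v 0) = 0"
    using assms(1,2,7) by (simp add: target_set_def lyapV_eq_0_iff)
  ultimately have "lyapV \<mu> k1 k2 L0 A0 (x t) (v t) = 0"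
    using lyapV_nonneg[of k1 k2] assms(1,2) by (metis antisym less_imp_le)
  then show ?thesis
    using assms(1,2,6,8) by (simp add: target_set_def lyapV_eq_0_iff ctrl_sol_def)
qed


section \<open>Critical points of the Lyapunov function\<close>

lemma angmom_inner_lrl: "angmom x v \<bullet> lrl \<mu> x v = 0"
  unfolding angmom_def lrl_def by (simp add: inner_diff_right dot_cross_self inner_commute)

text \<open>\<open>(2x, -v)\<close> generates the scaling \<open>(x, v) \<mapsto> (s\<^sup>2x, v/s)\<close>, which fixes \<open>A\<close> and multiplies
  \<open>L\<close> by \<open>s\<close>.\<close>

lemma cross3_scaling: "(2 *\<^sub>R x) \<times> v + x \<times> - v = x \<times> v"
  by (simp only: scaleR_2 cross_add_left cross_minus_right) simp

lemma lrl_deriv_scaling: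
  assumes "x \<noteq> 0"
  shows "lrl_deriv \<mu> x v (2 *\<^sub>R x) (- v) = 0"
proof -
  have "\<mu> * (x \<bullet> (2 *\<^sub>R x)) / norm x ^ 3 = 2 * (\<mu> / norm x)"
    using assms by (simp add: power2_norm_eq_inner[symmetric] power2_eq_square power3_eq_cube)
  then show ?thesis
    unfolding lrl_deriv_def cross3_scaling by (simp add: cross_skew[of v])
qed

lemma lrl_deriv_position: "x \<noteq> 0 \<Longrightarrow> lrl_deriv \<mu> x v x 0 = v \<times> (x \<times> v)"
  by (simp add: lrl_deriv_def power2_norm_eq_inner[symmetric] power2_eq_square power3_eq_cube)

lemma lrl_deriv_velocity: "lrl_deriv \<mu> x v 0 x = x \<times> (x \<times> v)"
  by (simp add: lrl_deriv_def)

lemma inner_cross3_cyclic: "a \<bullet> (b \<times> c) = b \<bullet> (c \<times> a)"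
  by (simp add: cross3_simps)

lemma cross3_jacobi: "(w \<times> a) \<times> b + a \<times> (w \<times> b) = w \<times> (a \<times> b)"
  by (simp add: cross3_simps)

lemma lrl_deriv_rotation: "lrl_deriv \<mu> x v (w \<times> x) (w \<times> v) = w \<times> lrl \<mu> x v"
  by (simp add: lrl_deriv_def lrl_def dot_cross_self cross3_jacobi cross_mult_right
      Cross3.right_diff_distrib)

lemma lyapV_critical_point_equations:
  fixes \<mu> k1 k2 :: real and x v L0 A0 :: vec3
  defines "L \<equiv> angmom x v" and "A \<equiv> lrl \<mu> x v" and "dL \<equiv> angmom x v - L0" and "dA \<equiv> lrl \<mu> x v - A0"
  assumes x: "x \<noteq> 0" and k: "k1 \<noteq> 0" "k2 \<noteq> 0" and crit: "lyapV_grad_sqnorm \<mu> k1 k2 L0 A0 x v = 0"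
  shows "dL \<bullet> L = 0" "dA \<bullet> (v \<times> L) = 0" "dA \<bullet> (x \<times> L) = 0" "k1 *\<^sub>R (L \<times> dL) + k2 *\<^sub>R (A \<times> dA) = 0"
proof -
  have deriv: "k1 * (dL \<bullet> (hx \<times> v + x \<times> hv)) + k2 * (dA \<bullet> lrl_deriv \<mu> x v hx hv) = 0" for hx hv
    using crit lyapV_deriv_eq_grad[of \<mu> k1 k2 L0 A0 x v hx hv]
    by (simp add: lyapV_grad_sqnorm_def lyapV_deriv_def add_nonneg_eq_0_iff dL_def dA_def)
  have L: "L = x \<times> v" by (simp add: L_def angmom_def)
  show i: "dL \<bullet> L = 0"
    using deriv[of "2 *\<^sub>R x" "- v", unfolded cross3_scaling] lrl_deriv_scaling[OF x] k by (simp add: L)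
  show "dA \<bullet> (v \<times> L) = 0"
    using deriv[of x 0] lrl_deriv_position[OF x] i k by (simp add: L)
  show "dA \<bullet> (x \<times> L) = 0"
    using deriv[of 0 x] lrl_deriv_velocity k by (simp add: L)
  have "w \<bullet> (k1 *\<^sub>R (L \<times> dL) + k2 *\<^sub>R (A \<times> dA)) = 0" for w
    using deriv[of "w \<times> x" "w \<times> v"] lrl_deriv_rotation[of \<mu> x v w]
      inner_cross3_cyclic[of dL w L] inner_cross3_cyclic[of dA w A]
    by (simp add: L A_def cross3_jacobi inner_add_right)
  then show "k1 *\<^sub>R (L \<times> dL) + k2 *\<^sub>R (A \<times> dA) = 0"
    using inner_eq_zero_iff by blast
qed

lemma cross3_cross3_eq_0_of_orthogonal: "p \<bullet> a = 0 \<Longrightarrow> p \<bullet> b = 0 \<Longrightarrow> p \<times> (a \<times> b) = 0"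
  by (simp add: Lagrange)

lemma cross3_cross3_common: "(a \<times> c) \<times> (b \<times> c) = (a \<bullet> (b \<times> c)) *\<^sub>R c"
  using exhaust_3 by (force simp add: cross3_simps)

text \<open>Writing \<open>dA = \<alpha> L\<close>, the rotation equation gives \<open>k1 dL = k2 \<alpha> A\<close>, and then
  \<open>L0 \<bullet> A0 = (L - dL) \<bullet> (A - \<alpha> L) = 0\<close> becomes \<open>\<alpha> (k1 |L|\<^sup>2 + k2 |A|\<^sup>2) = 0\<close>.\<close>

lemma critical_point_linear_algebra:
  fixes L A dL dA :: vec3
  assumes k: "k1 > 0" "k2 > 0" and L: "L \<noteq> 0" and LA: "L \<bullet> A = 0" and perp: "(L - dL) \<bullet> (A - dA) = 0"
    and dLL: "dL \<bullet> L = 0" and dA_par: "dA \<times> L = 0" and rot: "k1 *\<^sub>R (L \<times> dL) + k2 *\<^sub>R (A \<times> dA) = 0"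
  shows "dL = 0 \<and> dA = 0"
proof -
  define \<alpha> where "\<alpha> = (L \<bullet> dA) / (L \<bullet> L)"
  have LL: "L \<bullet> L \<noteq> 0" using L by simp
  have "L \<times> (dA \<times> L) = (L \<bullet> L) *\<^sub>R dA - (L \<bullet> dA) *\<^sub>R L" by (rule Lagrange)
  then have "(L \<bullet> L) *\<^sub>R dA = (L \<bullet> L) *\<^sub>R (\<alpha> *\<^sub>R L)"
    using dA_par LL by (simp add: \<alpha>_def)
  then have dA: "dA = \<alpha> *\<^sub>R L"
    using LL by (metis scaleR_cancel_left)
  have "A \<times> dA = - (\<alpha> *\<^sub>R (L \<times> A))"
    by (simp add: dA cross_mult_right cross_skew[of A L])
  then have "L \<times> (k1 *\<^sub>R dL - (k2 * \<alpha>) *\<^sub>R A) = L \<times> 0"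
    using rot by (simp add: Cross3.right_diff_distrib cross_mult_right scaleR_add_right)
  moreover have "L \<bullet> (k1 *\<^sub>R dL - (k2 * \<alpha>) *\<^sub>R A) = L \<bullet> 0"
    using dLL LA by (simp add: inner_diff_right inner_commute)
  ultimately have dL: "k1 *\<^sub>R dL = (k2 * \<alpha>) *\<^sub>R A"
    using cross_dot_cancel[OF _ _ L] by fastforce
  have "L \<bullet> A - \<alpha> * (L \<bullet> L) - dL \<bullet> A + \<alpha> * (dL \<bullet> L) = 0"
    using perp by (simp add: dA inner_diff_left inner_diff_right inner_commute right_diff_distrib)
  then have "dL \<bullet> A = - \<alpha> * (L \<bullet> L)"
    using dLL LA by simp
  moreover have "k1 * (dL \<bullet> A) = k2 * \<alpha> * (A \<bullet> A)"
    using arg_cong[OF dL, of "\<lambda>u. u \<bullet> A"] by simp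
  ultimately have "\<alpha> * (k1 * (L \<bullet> L) + k2 * (A \<bullet> A)) = 0"
    by (simp add: distrib_left mult_ac)
  moreover have "k1 * (L \<bullet> L) + k2 * (A \<bullet> A) > 0"
    using k L by (simp add: add_pos_nonneg)
  ultimately have "\<alpha> = 0" by simp
  then show ?thesis using dL dA k by simp
qed

lemma lyapV_critical_point_in_target:
  assumes k: "k1 > 0" "k2 > 0" and x: "x \<noteq> 0" and L: "angmom x v \<noteq> 0" and perp: "L0 \<bullet> A0 = 0"
    and crit: "lyapV_grad_sqnorm \<mu> k1 k2 L0 A0 x v = 0"
  shows "angmom x v = L0 \<and> lrl \<mu> x v = A0"
proof -
  define L A where "L = angmom x v" and "A = lrl \<mu> x v"
  note eqs = lyapV_critical_point_equations[OF x _ _ crit, folded L_def A_def]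
  have "(v \<times> L) \<times> (x \<times> L) = - (L \<bullet> L) *\<^sub>R L"
  proof -
    have "v \<bullet> (x \<times> L) = L \<bullet> (v \<times> x)"
      by (metis inner_cross3_cyclic)
    also have "\<dots> = - (L \<bullet> L)"
      by (simp add: L_def angmom_def cross_skew[of v x])
    finally show ?thesis by (simp add: cross3_cross3_common)
  qed
  then have "dA \<times> L = 0" if "dA \<bullet> (v \<times> L) = 0" "dA \<bullet> (x \<times> L) = 0" for dA
    using cross3_cross3_eq_0_of_orthogonal[OF that] L by (simp add: L_def cross_mult_right)
  then have "(angmom x v - L0) = 0 \<and> (lrl \<mu> x v - A0) = 0"
    using eqs k L perp angmom_inner_lrl[of x v \<mu>]
    by (intro critical_point_linear_algebra[of k1 k2 L A]) (auto simp: L_def A_def)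
  then show ?thesis by simp
qed


section \<open>The sublevel set\<close>

lemma lrl_inner_position:
  assumes "x \<noteq> 0"
  shows "lrl \<mu> x v \<bullet> x = (norm (angmom x v))\<^sup>2 - \<mu> * norm x"
proof -
  have "x \<bullet> (v \<times> (x \<times> v)) = (x \<times> v) \<bullet> (x \<times> v)"
    by (simp add: cross3_simps)
  moreover have "(\<mu> / norm x) * (x \<bullet> x) = \<mu> * norm x"
    using assms by (simp add: power2_norm_eq_inner[symmetric] power2_eq_square)
  ultimately show ?thesis
    unfolding lrl_def angmom_def
    by (simp add: inner_diff_left inner_diff_right inner_commute power2_norm_eq_inner)
qed

lemma norm_cross3_velocity_angmom: "norm (v \<times> angmom x v) = norm v * norm (angmom x v)"
proof -
  have "(norm (v \<times> angmom x v))\<^sup>2 = (norm v * norm (angmom x v))\<^sup>2"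
    using norm_cross_dot[of v "angmom x v"] by (simp add: angmom_def dot_cross_self)
  then show ?thesis by simp
qed

lemma le_sqrt_of_half_mult_power2_le:
  assumes "0 < k" "k / 2 * a\<^sup>2 \<le> c" "0 \<le> a"
  shows "a \<le> sqrt (2 * c / k)"
proof -
  have "a\<^sup>2 \<le> 2 * c / k" using assms(1,2) by (simp add: field_simps)
  from real_sqrt_le_mono[OF this] show ?thesis using assms(3) by simp
qed

locale kepler_control =
  fixes \<mu> k1 k2 c :: real and L0 A0 :: vec3
  assumes mu: "\<mu> > 0" and k1: "k1 > 0" and k2: "k2 > 0" and A0_less: "norm A0 < \<mu>"
    and L0_A0: "L0 \<bullet> A0 = 0" and c_angmom: "c < k1 * (norm L0)\<^sup>2 / 2"
    and c_lrl: "c < k2 * (\<mu> - norm A0)\<^sup>2 / 2"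
begin

definition "angmom_dev = sqrt (2 * c / k1)"
definition "lrl_dev = sqrt (2 * c / k2)"
definition "angmom_min = norm L0 - angmom_dev"
definition "angmom_max = norm L0 + angmom_dev"
definition "lrl_max = norm A0 + lrl_dev"
definition "radius_min = angmom_min\<^sup>2 / (2 * \<mu>)"
definition "radius_max = angmom_max\<^sup>2 / (\<mu> - lrl_max)"
definition "speed_max = 2 * \<mu> / angmom_min"

definition sublevel :: "(vec3 \<times> vec3) set" where
  "sublevel = {p. fst p \<noteq> 0 \<and> lyapV \<mu> k1 k2 L0 A0 (fst p) (snd p) \<le> c}"

lemma angmom_min_pos: "angmom_min > 0"
proof -
  have "2 * c / k1 < (norm L0)\<^sup>2" using c_angmom k1 by (simp add: field_simps)
  from real_sqrt_less_mono[OF this] show ?thesis by (simp add: angmom_min_def angmom_dev_def)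
qed

lemma lrl_max_less: "lrl_max < \<mu>"
proof -
  have "2 * c / k2 < (\<mu> - norm A0)\<^sup>2" using c_lrl k2 by (simp add: field_simps)
  from real_sqrt_less_mono[OF this] show ?thesis using A0_less by (simp add: lrl_max_def lrl_dev_def)
qed

lemma radius_min_pos: "radius_min > 0"
  using angmom_min_pos mu by (simp add: radius_min_def)

text \<open>The bounds on \<open>|x|\<close> come from \<open>A \<bullet> x = |L|\<^sup>2 - \<mu> |x|\<close>, those on \<open>|v|\<close> from
  \<open>v \<times> L = A + \<mu> x / |x|\<close>.\<close>

lemma sublevel_bounds:
  assumes x: "x \<noteq> 0" and V: "lyapV \<mu> k1 k2 L0 A0 x v \<le> c"
  shows "angmom_min \<le> norm (angmom x v)" "radius_min \<le> norm x" "norm x \<le> radius_max"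
    "norm v \<le> speed_max"
proof -
  define l a n where "l = norm (angmom x v)" and "a = norm (lrl \<mu> x v)" and "n = norm x"
  have "k1 / 2 * (norm (angmom x v - L0))\<^sup>2 \<le> c" "k2 / 2 * (norm (lrl \<mu> x v - A0))\<^sup>2 \<le> c"
    using V k1 k2 unfolding lyapV_def
    by (smt (verit) zero_le_power2 divide_nonneg_nonneg mult_nonneg_nonneg)+
  then have "norm (angmom x v - L0) \<le> angmom_dev" "norm (lrl \<mu> x v - A0) \<le> lrl_dev"
    unfolding angmom_dev_def lrl_dev_def using k1 k2 by (simp_all add: le_sqrt_of_half_mult_power2_le)
  then have l: "angmom_min \<le> l" "l \<le> angmom_max" and a: "a \<le> lrl_max"
    unfolding l_def a_def angmom_min_def angmom_max_def lrl_max_def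
    by (smt (verit) norm_triangle_sub norm_minus_commute)+
  then show "angmom_min \<le> norm (angmom x v)" by (simp add: l_def)
  have n: "n > 0" using x by (simp add: n_def)
  have a_less: "a < \<mu>" using a lrl_max_less by simp
  have "\<bar>l\<^sup>2 - \<mu> * n\<bar> \<le> a * n"
    using lrl_inner_position[OF x, of \<mu> v] Cauchy_Schwarz_ineq2[of "lrl \<mu> x v" x]
    by (simp add: l_def a_def n_def)
  then have upper: "l\<^sup>2 \<le> (\<mu> + a) * n" and lower: "(\<mu> - a) * n \<le> l\<^sup>2"
    by (simp_all add: algebra_simps abs_le_iff)
  have "angmom_min\<^sup>2 \<le> l\<^sup>2" using l angmom_min_pos by (intro power_mono) auto
  also have "\<dots> \<le> (2 * \<mu>) * n" using upper a_less n by (smt (verit) mult_right_mono)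
  finally show "radius_min \<le> norm x"
    unfolding radius_min_def n_def[symmetric] using mu by (simp add: divide_le_eq mult.commute)
  have "(\<mu> - lrl_max) * n \<le> (\<mu> - a) * n" using a n by (intro mult_right_mono) auto
  also have "\<dots> \<le> angmom_max\<^sup>2"
    using lower l angmom_min_pos by (smt (verit) power_mono)
  finally show "norm x \<le> radius_max"
    unfolding radius_max_def n_def[symmetric] using lrl_max_less
    by (simp add: le_divide_eq mult.commute)
  have "norm v * l = norm (lrl \<mu> x v + (\<mu> / norm x) *\<^sub>R x)"
    using norm_cross3_velocity_angmom[of v x] by (simp add: l_def lrl_def angmom_def)
  also have "\<dots> \<le> a + \<mu>"
    using norm_triangle_ineq[of "lrl \<mu> x v" "(\<mu> / norm x) *\<^sub>R x"] x mu by (simp add: a_def)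
  finally have "norm v * angmom_min \<le> 2 * \<mu>"
    using a_less mult_left_mono[OF l(1) norm_ge_zero, of v] by linarith
  then show "norm v \<le> speed_max"
    unfolding speed_max_def using angmom_min_pos by (simp add: le_divide_eq)
qed

lemma continuous_on_lyapV:
  "continuous_on {p :: vec3 \<times> vec3. fst p \<noteq> 0} (\<lambda>p. lyapV \<mu> k1 k2 L0 A0 (fst p) (snd p))"
  unfolding lyapV_def angmom_def lrl_def by (intro continuous_intros continuous_on_cross) auto

lemma sublevel_eq:
  "sublevel = {p. radius_min \<le> norm (fst p)} \<inter> (\<lambda>p. lyapV \<mu> k1 k2 L0 A0 (fst p) (snd p)) -` {..c}"
  using sublevel_bounds(2) radius_min_pos unfolding sublevel_def by force

lemma compact_sublevel: "compact sublevel"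
proof -
  have "closed sublevel"
    unfolding sublevel_eq
    by (intro continuous_closed_preimage closed_Collect_le closed_atMost continuous_intros
        continuous_on_subset[OF continuous_on_lyapV]) (use radius_min_pos in auto)
  moreover have "sublevel \<subseteq> cball 0 (radius_max + speed_max)"
  proof
    fix p assume "p \<in> sublevel"
    then have "norm (fst p) \<le> radius_max" "norm (snd p) \<le> speed_max"
      using sublevel_bounds unfolding sublevel_def by auto
    moreover have "norm p \<le> norm (fst p) + norm (snd p)"
      using sqrt_sum_squares_le_sum[of "norm (fst p)" "norm (snd p)"] by (simp add: norm_prod_def)
    ultimately show "p \<in> cball 0 (radius_max + speed_max)" by simp
  qed
  ultimately show ?thesis
    using bounded_cball bounded_subset compact_eq_bounded_closed by blast
qed

lemma ctrl_sol_in_sublevel: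
  assumes "is_interval I" "0 \<in> I" "I \<subseteq> {0..}" "ctrl_sol \<mu> k1 k2 L0 A0 I x v"
    and "lyapV \<mu> k1 k2 L0 A0 (x 0) (v 0) \<le> c" "t \<in> I"
  shows "(x t, v t) \<in> sublevel"
  using ctrl_sol_lyapV_antimono[OF assms(1,4,2,6)] assms(3-6)
  unfolding sublevel_def ctrl_sol_def by force

end


section \<open>Convergence to the target set\<close>

lemma lipschitz_on_of_bounded_vector_derivative:
  fixes y :: "real \<Rightarrow> 'a::real_normed_vector"
  assumes "convex S" and y': "\<And>t. t \<in> S \<Longrightarrow> (y has_vector_derivative y' t) (at t within S)"
    and bound: "\<And>t. t \<in> S \<Longrightarrow> norm (y' t) \<le> M" and "M \<ge> 0"
  shows "M-lipschitz_on S y"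
proof (rule lipschitz_onI)
  fix s t assume "s \<in> S" "t \<in> S"
  have "norm (y s - y t) \<le> M * norm (s - t)"
  proof (rule differentiable_bound[where f'="\<lambda>t h. h *\<^sub>R y' t"])
    show "(y has_derivative (\<lambda>h. h *\<^sub>R y' r)) (at r within S)" if "r \<in> S" for r
      using y'[OF that] by (simp add: has_vector_derivative_def)
    show "onorm (\<lambda>h. h *\<^sub>R y' r) \<le> M" if "r \<in> S" for r
      using bound[OF that] onorm_scaleR_left[OF bounded_linear_ident, of "y' r"]
      by (simp add: onorm_id)
  qed (use assms \<open>s \<in> S\<close> \<open>t \<in> S\<close> in auto)
  then show "dist (y s) (y t) \<le> M * dist s t"
    by (simp add: dist_norm)
qed (use assms in simp)

lemma uniformly_continuous_on_subset:
  fixes f :: "'a::metric_space \<Rightarrow> 'b::metric_space"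
  shows "uniformly_continuous_on T f \<Longrightarrow> S \<subseteq> T \<Longrightarrow> uniformly_continuous_on S f"
  unfolding uniformly_continuous_on_def by (meson subsetD)

text \<open>Otherwise \<open>g \<ge> \<eta>/2\<close> on arbitrarily late intervals of a fixed length \<open>\<delta>\<close>,
  on each of which \<open>f\<close> drops by \<open>\<eta>\<delta>/2\<close>, while the drop of the monotone bounded \<open>f\<close> over
  \<open>[t, t + \<delta>]\<close> tends to \<open>0\<close>.\<close>

lemma barbalat:
  fixes f g :: "real \<Rightarrow> real"
  assumes f': "\<And>t. t \<ge> 0 \<Longrightarrow> (f has_real_derivative - g t) (at t within {0..})"
    and g_nonneg: "\<And>t. t \<ge> 0 \<Longrightarrow> g t \<ge> 0" and f_bdd: "\<And>t. t \<ge> 0 \<Longrightarrow> B \<le> f t"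
    and g_uc: "uniformly_continuous_on {0..} g"
  shows "(g \<longlongrightarrow> 0) at_top"
proof -
  have f_antimono: "f t \<le> f s" if "0 \<le> s" "s \<le> t" for s t
    using has_real_derivative_nonpos_imp_antimono_on_interval[OF is_interval_ci[of 0],
        where g=f and g'="\<lambda>t. - g t" and a=s and b=t] f' g_nonneg that by simp
  define l where "l = Inf (f ` {0..})"
  have bdd: "bdd_below (f ` {0..})" using f_bdd by (intro bdd_belowI[of _ B]) auto
  have drop_small: "\<exists>T\<ge>0. \<forall>t\<ge>T. f t - f (t + \<delta>) < \<epsilon>" if "\<epsilon> > 0" "\<delta> \<ge> 0" for \<epsilon> \<delta>
  proof -
    obtain T where T: "T \<ge> 0" "f T < l + \<epsilon>"
      using cInf_less_iff[OF _ bdd, of "l + \<epsilon>"] \<open>\<epsilon> > 0\<close> by (auto simp: l_def)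
    have "f t - f (t + \<delta>) < \<epsilon>" if "T \<le> t" for t
      using f_antimono[of T t] cInf_lower[OF _ bdd, of "f (t + \<delta>)"] T that \<open>\<delta> \<ge> 0\<close>
      by (fastforce simp: l_def)
    with T show ?thesis by blast
  qed
  have small: "\<exists>T. \<forall>t\<ge>T. g t < \<eta>" if "\<eta> > 0" for \<eta>
  proof (rule ccontr)
    assume contra: "\<nexists>T. \<forall>t\<ge>T. g t < \<eta>"
    obtain d where d: "d > 0" "\<And>s t. s \<ge> 0 \<Longrightarrow> t \<ge> 0 \<Longrightarrow> dist s t < d \<Longrightarrow> dist (g s) (g t) < \<eta> / 2"
      using g_uc \<open>\<eta> > 0\<close> unfolding uniformly_continuous_on_def
      by (metis atLeast_iff half_gt_zero)
    define \<delta> where "\<delta> = d / 2"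
    have \<delta>: "\<delta> > 0" "\<delta> < d" using d by (auto simp: \<delta>_def)
    obtain T where T: "T \<ge> 0" "\<And>t. t \<ge> T \<Longrightarrow> f t - f (t + \<delta>) < \<eta> * \<delta> / 2"
      using drop_small[of "\<eta> * \<delta> / 2" \<delta>] \<open>\<eta> > 0\<close> \<delta> by auto
    obtain t where t: "t \<ge> T" "g t \<ge> \<eta>" using contra by (meson not_less)
    have "(f has_derivative (*) (- g s)) (at s within {t..t + \<delta>})" if "s \<in> {t..t + \<delta>}" for s
      using has_field_derivative_subset[OF f'[of s], of "{t..t + \<delta>}"] that T t
      by (auto simp: has_field_derivative_def)
    then obtain s where s: "s \<in> {t..t + \<delta>}" "f (t + \<delta>) - f t = - g s * \<delta>"
      using mvt_very_simple[of t "t + \<delta>" f "\<lambda>s. (*) (- g s)"] \<delta> by auto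
    have "dist (g s) (g t) < \<eta> / 2"
      using d(2)[of s t] s T t \<delta> by (auto simp: dist_real_def)
    then have "\<eta> / 2 \<le> g s"
      using t(2) unfolding dist_real_def abs_less_iff by linarith
    then have "\<eta> / 2 * \<delta> \<le> g s * \<delta>"
      using \<delta> by (intro mult_right_mono) auto
    then show False using s(2) T(2)[OF t(1)] by simp
  qed
  show ?thesis
  proof (rule tendstoI)
    fix \<eta> :: real assume "\<eta> > 0"
    then obtain T where "\<forall>t\<ge>T. g t < \<eta>" using small by blast
    then show "eventually (\<lambda>t. dist (g t) 0 < \<eta>) at_top"
      using g_nonneg unfolding eventually_at_top_linorder
      by (intro exI[of _ "max T 0"]) (simp add: dist_real_def)
  qed
qed

text \<open>Away from \<open>S\<close>, \<open>|f|\<close> has a positive minimum on \<open>K\<close>.\<close>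

lemma infdist_tendsto_0_of_compact:
  fixes f :: "'a::metric_space \<Rightarrow> 'b::real_normed_vector"
  assumes K: "compact K" and f: "continuous_on K f" and zeros: "\<And>p. p \<in> K \<Longrightarrow> f p = 0 \<Longrightarrow> p \<in> S"
    and y_in_K: "eventually (\<lambda>t. y t \<in> K) F" and lim: "((\<lambda>t. f (y t)) \<longlongrightarrow> 0) F"
  shows "((\<lambda>t. infdist (y t) S) \<longlongrightarrow> 0) F"
proof (rule tendstoI)
  fix \<epsilon> :: real assume "\<epsilon> > 0"
  define K\<epsilon> where "K\<epsilon> = K \<inter> {p. \<epsilon> \<le> infdist p S}"
  have near: "dist (infdist p S) 0 < \<epsilon>" if "p \<in> K" "p \<notin> K\<epsilon>" for p
    using that infdist_nonneg[of p S] by (auto simp: K\<epsilon>_def)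
  show "eventually (\<lambda>t. dist (infdist (y t) S) 0 < \<epsilon>) F"
  proof (cases "K\<epsilon> = {}")
    case True
    then show ?thesis using near by (auto intro: eventually_mono[OF y_in_K])
  next
    case False
    have "compact K\<epsilon>"
      unfolding K\<epsilon>_def by (intro compact_Int_closed K closed_Collect_le continuous_intros)
    moreover have "continuous_on K\<epsilon> (\<lambda>p. norm (f p))"
      by (intro continuous_on_norm continuous_on_subset[OF f]) (auto simp: K\<epsilon>_def)
    ultimately obtain q where q: "q \<in> K\<epsilon>" "\<And>p. p \<in> K\<epsilon> \<Longrightarrow> norm (f q) \<le> norm (f p)"
      using continuous_attains_inf[OF _ False] by blast
    have "f q \<noteq> 0"
      using q(1) zeros \<open>\<epsilon> > 0\<close> by (auto simp: K\<epsilon>_def)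
    then have "eventually (\<lambda>t. norm (f (y t)) < norm (f q)) F"
      using tendstoD[OF lim, of "norm (f q)"] by simp
    with y_in_K show ?thesis
      by eventually_elim (use q(2) near in fastforce)
  qed
qed

definition ctrl_field :: "real \<Rightarrow> real \<Rightarrow> real \<Rightarrow> vec3 \<Rightarrow> vec3 \<Rightarrow> vec3 \<times> vec3 \<Rightarrow> vec3 \<times> vec3" where
  "ctrl_field \<mu> k1 k2 L0 A0 p =
     (ctrl_x \<mu> k1 k2 L0 A0 (fst p) (snd p), ctrl_v \<mu> k1 k2 L0 A0 (fst p) (snd p))"

lemma continuous_on_ctrl_field:
  "continuous_on {p :: vec3 \<times> vec3. fst p \<noteq> 0} (ctrl_field \<mu> k1 k2 L0 A0)"
  unfolding ctrl_field_def ctrl_x_def ctrl_v_def Let_def angmom_def lrl_def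
  by (intro continuous_intros continuous_on_cross) auto

lemma continuous_on_lyapV_grad_sqnorm:
  "continuous_on {p :: vec3 \<times> vec3. fst p \<noteq> 0} (\<lambda>p. lyapV_grad_sqnorm \<mu> k1 k2 L0 A0 (fst p) (snd p))"
  unfolding lyapV_grad_sqnorm_def lyapV_grad_x_def lyapV_grad_v_def Let_def angmom_def lrl_def
  by (intro continuous_intros continuous_on_cross) auto

lemma ctrl_sol_has_vector_derivative:
  assumes "ctrl_sol \<mu> k1 k2 L0 A0 I x v" "t \<in> I"
  shows "((\<lambda>s. (x s, v s)) has_vector_derivative ctrl_field \<mu> k1 k2 L0 A0 (x t, v t)) (at t within I)"
  using assms unfolding ctrl_sol_def ctrl_field_def by (auto intro!: has_vector_derivative_Pair)

context kepler_control
begin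

lemma sublevel_critical_point_in_target_set:
  assumes "p \<in> sublevel" "lyapV_grad_sqnorm \<mu> k1 k2 L0 A0 (fst p) (snd p) = 0"
  shows "p \<in> target_set \<mu> L0 A0"
proof -
  have x: "fst p \<noteq> 0" and "lyapV \<mu> k1 k2 L0 A0 (fst p) (snd p) \<le> c"
    using assms(1) by (auto simp: sublevel_def)
  then have "angmom (fst p) (snd p) \<noteq> 0"
    using sublevel_bounds(1) angmom_min_pos by force
  then show ?thesis
    using lyapV_critical_point_in_target[OF k1 k2 x _ L0_A0] assms(2) x
    by (cases p) (simp add: target_set_def)
qed

lemma ctrl_sol_lyapV_grad_sqnorm_tendsto_0:
  assumes sol: "ctrl_sol \<mu> k1 k2 L0 A0 {0..} x v" and V0: "lyapV \<mu> k1 k2 L0 A0 (x 0) (v 0) \<le> c"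
  shows "((\<lambda>t. lyapV_grad_sqnorm \<mu> k1 k2 L0 A0 (x t) (v t)) \<longlongrightarrow> 0) at_top"
proof -
  define y where "y = (\<lambda>t. (x t, v t))"
  define G where "G p = lyapV_grad_sqnorm \<mu> k1 k2 L0 A0 (fst p) (snd p)" for p
  have y_in: "y t \<in> sublevel" if "t \<ge> 0" for t
    using ctrl_sol_in_sublevel[OF is_interval_ci _ _ sol V0] that by (simp add: y_def)
  have sublevel_sub: "sublevel \<subseteq> {p. fst p \<noteq> 0}" by (auto simp: sublevel_def)
  have "bounded (ctrl_field \<mu> k1 k2 L0 A0 ` sublevel)"
    using compact_imp_bounded[OF compact_continuous_image[OF
          continuous_on_subset[OF continuous_on_ctrl_field sublevel_sub] compact_sublevel]] .
  then obtain M where M: "M > 0" "\<And>p. p \<in> sublevel \<Longrightarrow> norm (ctrl_field \<mu> k1 k2 L0 A0 p) \<le> M"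
    unfolding bounded_pos by blast
  have y_lip: "M-lipschitz_on {0..} y"
  proof (rule lipschitz_on_of_bounded_vector_derivative)
    show "(y has_vector_derivative ctrl_field \<mu> k1 k2 L0 A0 (y t)) (at t within {0..})"
      if "t \<in> {0..}" for t
      using ctrl_sol_has_vector_derivative[OF sol that] by (simp add: y_def)
    show "norm (ctrl_field \<mu> k1 k2 L0 A0 (y t)) \<le> M" if "t \<in> {0..}" for t
      using M(2) y_in that by simp
  qed (use M in auto)
  have "uniformly_continuous_on sublevel G"
    unfolding G_def by (intro compact_uniformly_continuous compact_sublevel
        continuous_on_subset[OF continuous_on_lyapV_grad_sqnorm sublevel_sub])
  then have "uniformly_continuous_on (y ` {0..}) G"
    by (rule uniformly_continuous_on_subset) (use y_in in auto)
  with lipschitz_on_uniformly_continuous[OF y_lip]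
  have G_y_uc: "uniformly_continuous_on {0..} (\<lambda>t. G (y t))"
    by (rule uniformly_continuous_on_compose)
  have "((\<lambda>t. G (y t)) \<longlongrightarrow> 0) at_top"
  proof (rule barbalat[where f="\<lambda>t. lyapV \<mu> k1 k2 L0 A0 (x t) (v t)" and B=0])
    show "((\<lambda>t. lyapV \<mu> k1 k2 L0 A0 (x t) (v t)) has_real_derivative - G (y t)) (at t within {0..})"
      if "t \<ge> 0" for t
      using ctrl_sol_lyapV_has_real_derivative[OF sol] that by (simp add: G_def y_def)
    show "0 \<le> G (y t)" for t
      by (simp add: G_def lyapV_grad_sqnorm_nonneg)
    show "0 \<le> lyapV \<mu> k1 k2 L0 A0 (x t) (v t)" for t
      using k1 k2 by (simp add: lyapV_nonneg)
  qed (fact G_y_uc)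
  then show ?thesis by (simp add: G_def y_def)
qed

lemma ctrl_sol_tendsto_target_set:
  assumes sol: "ctrl_sol \<mu> k1 k2 L0 A0 {0..} x v" and V0: "lyapV \<mu> k1 k2 L0 A0 (x 0) (v 0) \<le> c"
  shows "((\<lambda>t. infdist (x t, v t) (target_set \<mu> L0 A0)) \<longlongrightarrow> 0) at_top"
proof (rule infdist_tendsto_0_of_compact[OF compact_sublevel])
  show "continuous_on sublevel (\<lambda>p. lyapV_grad_sqnorm \<mu> k1 k2 L0 A0 (fst p) (snd p))"
    by (rule continuous_on_subset[OF continuous_on_lyapV_grad_sqnorm]) (auto simp: sublevel_def)
  show "eventually (\<lambda>t. (x t, v t) \<in> sublevel) at_top"
    using ctrl_sol_in_sublevel[OF is_interval_ci _ _ sol V0]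
    unfolding eventually_at_top_linorder by (intro exI[of _ 0]) auto
qed (use sublevel_critical_point_in_target_set ctrl_sol_lyapV_grad_sqnorm_tendsto_0[OF sol V0] in auto)

end


section \<open>Global solutions of bounded Lipschitz differential equations\<close>

lemma integral_from_0_lipschitz:
  fixes g :: "real \<Rightarrow> 'a::euclidean_space"
  assumes cg: "continuous_on UNIV g" and b: "\<And>s. norm (g s) \<le> B"
  shows "norm (integral {0..t} g - integral {0..s} g) \<le> B * \<bar>t - s\<bar>"
proof -
  have B0: "B \<ge> 0" using b[of 0] norm_ge_zero order_trans by blast
  have int: "\<And>a b. g integrable_on {a..b}"
    by (rule integrable_continuous_interval[OF continuous_on_subset[OF cg]]) auto
  have main: "norm (integral {0..t} g - integral {0..s} g) \<le> B * (t - s)" if st: "s \<le> t" for s t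
  proof (cases "t < 0")
    case True
    then show ?thesis using st B0 by simp
  next
    case False
    show ?thesis
    proof (cases "s < 0")
      case True
      have "norm (integral {0..t} g) \<le> B * (t - 0)"
        by (rule integral_bound) (use False b in \<open>auto intro: continuous_on_subset[OF cg]\<close>)
      also have "\<dots> \<le> B * (t - s)" using True B0 by (intro mult_left_mono) auto
      finally show ?thesis using True by simp
    next
      case False
      have "integral {0..s} g + integral {s..t} g = integral {0..t} g"
        by (rule Henstock_Kurzweil_Integration.integral_combine) (use False st int in auto)
      then have "integral {0..t} g - integral {0..s} g = integral {s..t} g" by (simp add: algebra_simps)
      moreover have "norm (integral {s..t} g) \<le> B * (t - s)"
        by (rule integral_bound) (use st b in \<open>auto intro: continuous_on_subset[OF cg]\<close>)
      ultimately show ?thesis by simp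
    qed
  qed
  show ?thesis
  proof (cases "s \<le> t")
    case True then show ?thesis using main[OF True] by simp
  next
    case False
    then have "norm (integral {0..s} g - integral {0..t} g) \<le> B * (s - t)" using main by simp
    then show ?thesis using False by (simp add: norm_minus_commute)
  qed
qed

lemma continuous_on_integral_from_0:
  fixes g :: "real \<Rightarrow> 'a::euclidean_space"
  assumes cg: "continuous_on UNIV g" and b: "\<And>s. norm (g s) \<le> B"
  shows "continuous_on UNIV (\<lambda>t. integral {0..t} g)"
proof -
  have B0: "B \<ge> 0" using b[of 0] norm_ge_zero order_trans by blast
  have "B-lipschitz_on UNIV (\<lambda>t. integral {0..t} g)"
    unfolding lipschitz_on_def using integral_from_0_lipschitz[OF cg b] B0 by (simp add: dist_norm)
  then show ?thesis by (rule lipschitz_on_continuous_on)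
qed

lemma integral_from_0_has_vector_derivative:
  fixes g :: "real \<Rightarrow> 'a::euclidean_space"
  assumes cg: "continuous_on UNIV g" and t: "t \<ge> 0"
  shows "((\<lambda>u. integral {0..u} g) has_vector_derivative g t) (at t within {0..})"
proof -
  have "((\<lambda>u. integral {0..u} g) has_vector_derivative g t) (at t within {0..t+1})"
    by (rule integral_has_vector_derivative[OF continuous_on_subset[OF cg]]) (use t in auto)
  moreover have "at t within {0..t+1} = at t within {0..}"
    by (rule at_within_nhd[where S="{t - 1 <..< t + 1}"]) auto
  ultimately show ?thesis by simp
qed

lemma exp_mult_has_integral:
  fixes a t :: real
  assumes a: "a > 0" and t: "t \<ge> 0"
  shows "((\<lambda>s. exp (a * s)) has_integral ((exp (a * t) - 1) / a)) {0..t}"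
proof -
  have "((\<lambda>s. exp (a * s)) has_integral (exp (a * t) / a - exp (a * 0) / a)) {0..t}"
  proof (rule fundamental_theorem_of_calculus[OF t])
    fix x assume "x \<in> {0..t}"
    have "((\<lambda>s. exp (a * s) / a) has_real_derivative (exp (a * x) * a / a)) (at x within {0..t})"
      by (auto intro!: derivative_eq_intros)
    then show "((\<lambda>s. exp (a * s) / a) has_vector_derivative exp (a * x)) (at x within {0..t})"
      using a by (simp add: has_real_derivative_iff_has_vector_derivative)
  qed
  then show ?thesis by (simp add: diff_divide_distrib)
qed

lemma exp_neg_mult_le_inverse:
  fixes a t :: real
  assumes "a > 0" "t \<ge> 0"
  shows "exp (- a * t) * t \<le> 1 / a"
proof -
  have "a * t \<le> exp (a * t)" using exp_ge_add_one_self[of "a * t"] by linarith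
  then have "t \<le> exp (a * t) / a" using assms by (simp add: field_simps)
  then have "exp (- a * t) * t \<le> exp (- a * t) * (exp (a * t) / a)" by (intro mult_left_mono) auto
  also have "\<dots> = 1 / a" by (simp add: exp_minus field_simps)
  finally show ?thesis .
qed

text \<open>Picard's operator for \<open>y' = F y\<close>, \<open>y 0 = y0\<close>, acting on the weighted unknown \<open>z t = e\<^sup>-\<^sup>a\<^sup>t y t\<close>
  (frozen for \<open>t \<le> 0\<close>). The weight makes it a contraction on all bounded continuous functions
  as soon as \<open>a\<close> exceeds twice the Lipschitz constant of \<open>F\<close>, which gives a solution on \<open>[0, \<infinity>)\<close>.\<close>

definition picard_step :: "('a::euclidean_space \<Rightarrow> 'a) \<Rightarrow> real \<Rightarrow> 'a \<Rightarrow> (real \<Rightarrow> 'a) \<Rightarrow> real \<Rightarrow> 'a" where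
  "picard_step F a y0 z t = exp (- a * max 0 t) *\<^sub>R (y0 + integral {0..t} (\<lambda>s. F (exp (a * s) *\<^sub>R z s)))"

lemma picard_step_bcontfun:
  fixes F :: "'a::euclidean_space \<Rightarrow> 'a"
  assumes F: "continuous_on UNIV F" "\<And>p. norm (F p) \<le> B" and a: "a > 0" and z: "continuous_on UNIV z"
  shows "picard_step F a y0 z \<in> bcontfun"
proof (rule bcontfun_normI)
  define g where "g s = F (exp (a * s) *\<^sub>R z s)" for s
  have g: "continuous_on UNIV g" "\<And>s. norm (g s) \<le> B"
    unfolding g_def by (intro continuous_on_compose2[OF F(1)] continuous_intros z) (simp_all add: F(2))
  have B: "B \<ge> 0" using F(2)[of 0] norm_ge_zero order_trans by blast
  show "continuous_on UNIV (picard_step F a y0 z)"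
    unfolding picard_step_def g_def[symmetric]
    by (intro continuous_intros continuous_on_integral_from_0[OF g])
  fix t
  have "norm (integral {0..t} g) \<le> B * max 0 t"
    using continuous_on_integral_from_0[OF g] integral_from_0_lipschitz[OF g, of t 0] B
    by (cases "t < 0") auto
  then have "norm (picard_step F a y0 z t) \<le> exp (- a * max 0 t) * (norm y0 + B * max 0 t)"
    unfolding picard_step_def g_def[symmetric]
    by (auto intro!: mult_left_mono order.trans[OF norm_triangle_ineq])
  also have "\<dots> = exp (- a * max 0 t) * norm y0 + B * (exp (- a * max 0 t) * max 0 t)"
    by (simp add: algebra_simps)
  also have "\<dots> \<le> norm y0 + B * (1 / a)"
    using exp_neg_mult_le_inverse[OF a, of "max 0 t"] B a
    by (intro add_mono mult_left_mono) (auto intro: mult_left_le_one_le)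
  finally show "norm (picard_step F a y0 z t) \<le> norm y0 + B * (1 / a)" .
qed

lemma picard_step_contraction:
  fixes F :: "'a::euclidean_space \<Rightarrow> 'a"
  assumes Lip: "\<And>p q. norm (F p - F q) \<le> Lc * norm (p - q)" and Lc: "Lc \<ge> 0" and a: "a > 0"
    and F: "continuous_on UNIV F" and z: "continuous_on UNIV z" and w: "continuous_on UNIV w"
    and D: "\<And>s. dist (z s) (w s) \<le> D"
  shows "dist (picard_step F a y0 z t) (picard_step F a y0 w t) \<le> Lc / a * D"
proof (cases "t < 0")
  case True
  have "D \<ge> 0" using D[of 0] zero_le_dist order_trans by blast
  then show ?thesis using True Lc a by (simp add: picard_step_def)
next
  case False
  then have t: "t \<ge> 0" by simp
  define gz gw where "gz s = F (exp (a * s) *\<^sub>R z s)" and "gw s = F (exp (a * s) *\<^sub>R w s)" for s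
  have int: "gz integrable_on {0..t}" "gw integrable_on {0..t}"
    unfolding gz_def gw_def
    by (intro integrable_continuous_interval continuous_on_compose2[OF F] continuous_intros
        continuous_on_subset[OF z] continuous_on_subset[OF w]; simp)+
  have pointwise: "norm (gz s - gw s) \<le> (Lc * D) * exp (a * s)" for s
  proof -
    have "norm (gz s - gw s) \<le> Lc * (exp (a * s) * dist (z s) (w s))"
      using Lip[of "exp (a * s) *\<^sub>R z s" "exp (a * s) *\<^sub>R w s"]
      by (simp add: gz_def gw_def dist_norm scaleR_diff_right[symmetric])
    also have "\<dots> \<le> Lc * (exp (a * s) * D)"
      using Lc D by (intro mult_left_mono) auto
    finally show ?thesis by (simp add: ac_simps)
  qed
  have "(\<lambda>s. (Lc * D) * exp (a * s)) integrable_on {0..t}"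
    by (intro integrable_continuous_interval continuous_intros)
  from integral_norm_bound_integral[OF integrable_diff[OF int] this pointwise]
  have "norm (integral {0..t} gz - integral {0..t} gw) \<le> integral {0..t} (\<lambda>s. (Lc * D) * exp (a * s))"
    by (simp add: integral_diff[OF int])
  also have "\<dots> = (Lc * D) * ((exp (a * t) - 1) / a)"
    using integral_unique[OF has_integral_mult_right[OF exp_mult_has_integral[OF a t]]] by simp
  finally have "exp (- a * t) * norm (integral {0..t} gz - integral {0..t} gw)
      \<le> exp (- a * t) * ((Lc * D) * ((exp (a * t) - 1) / a))"
    by (intro mult_left_mono) auto
  also have "\<dots> = (Lc * D / a) * (1 - exp (- a * t))"
    using a by (simp add: field_simps exp_minus)
  also have "\<dots> \<le> (Lc * D / a) * 1"
    using a Lc order_trans[OF zero_le_dist D[of 0]] by (intro mult_left_mono) auto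
  also have "\<dots> = Lc / a * D"
    by simp
  finally show ?thesis
    using t by (simp add: picard_step_def dist_norm gz_def[abs_def] gw_def[abs_def]
        scaleR_diff_right[symmetric])
qed

theorem bounded_lipschitz_ode_global_solution:
  fixes F :: "'a::euclidean_space \<Rightarrow> 'a"
  assumes Lip: "\<And>p q. norm (F p - F q) \<le> Lc * norm (p - q)" and bound: "\<And>p. norm (F p) \<le> B"
    and Lc: "Lc > 0"
  obtains y where "y 0 = y0" "\<And>t. t \<ge> 0 \<Longrightarrow> (y has_vector_derivative F (y t)) (at t within {0..})"
proof -
  define a where "a = 2 * Lc"
  have a: "a > 0" using Lc by (simp add: a_def)
  have F: "continuous_on UNIV F"
    using Lip Lc by (intro lipschitz_on_continuous_on[of Lc]) (auto simp: lipschitz_on_def dist_norm)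
  define \<Phi> where "\<Phi> z = Bcontfun (picard_step F a y0 (apply_bcontfun z))" for z
  have \<Phi>: "apply_bcontfun (\<Phi> z) = picard_step F a y0 (apply_bcontfun z)" for z
    unfolding \<Phi>_def
    by (intro Bcontfun_inverse picard_step_bcontfun[OF F bound a] continuous_on_apply_bcontfun)
  have "dist (\<Phi> z) (\<Phi> w) \<le> 1 / 2 * dist z w" for z w
    using picard_step_contraction[OF Lip _ a F continuous_on_apply_bcontfun
        continuous_on_apply_bcontfun dist_bounded] Lc
    by (intro dist_bound) (simp add: \<Phi> a_def)
  then obtain z where z: "\<Phi> z = z"
    using banach_fix_type[of "1/2" \<Phi>] by auto
  define y where "y t = exp (a * max 0 t) *\<^sub>R apply_bcontfun z t" for t
  define g where "g s = F (exp (a * s) *\<^sub>R apply_bcontfun z s)" for s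
  have y_eq: "y t = y0 + integral {0..t} g" if "t \<ge> 0" for t
    using fun_cong[OF \<Phi>[of z], of t] that
    by (simp add: z y_def g_def[abs_def] picard_step_def exp_minus)
  have g: "continuous_on UNIV g"
    unfolding g_def by (intro continuous_on_compose2[OF F] continuous_intros) auto
  show ?thesis
  proof
    show "y 0 = y0" using y_eq[of 0] by simp
    fix t :: real assume t: "t \<ge> 0"
    have "((\<lambda>u. y0 + integral {0..u} g) has_vector_derivative g t) (at t within {0..})"
      using has_vector_derivative_add[OF has_vector_derivative_const
          integral_from_0_has_vector_derivative[OF g t]] by simp
    then have "(y has_vector_derivative g t) (at t within {0..})"
      by (rule has_vector_derivative_transform[rotated 2]) (use t y_eq in auto)
    then show "(y has_vector_derivative F (y t)) (at t within {0..})"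
      using t by (simp add: g_def y_def)
  qed
qed


section \<open>Existence of global trajectories\<close>

definition bounded_lipschitz :: "('p::metric_space \<Rightarrow> 'b::real_normed_vector) \<Rightarrow> bool" where
  "bounded_lipschitz f \<longleftrightarrow>
     (\<exists>B. \<forall>p. norm (f p) \<le> B) \<and> (\<exists>L. \<forall>p q. norm (f p - f q) \<le> L * dist p q)"

lemma bounded_lipschitzI:
  "(\<And>p. norm (f p) \<le> B) \<Longrightarrow> (\<And>p q. norm (f p - f q) \<le> L * dist p q) \<Longrightarrow> bounded_lipschitz f"
  unfolding bounded_lipschitz_def by blast

lemma bounded_lipschitzE:
  assumes "bounded_lipschitz f"
  obtains B L where "B \<ge> 0" "L \<ge> 0" "\<And>p. norm (f p) \<le> B" "\<And>p q. norm (f p - f q) \<le> L * dist p q"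
proof -
  from assms obtain B L where B: "\<And>p. norm (f p) \<le> B" and L: "\<And>p q. norm (f p - f q) \<le> L * dist p q"
    unfolding bounded_lipschitz_def by blast
  show ?thesis
  proof (rule that[of "max B 0" "max L 0"])
    show "norm (f p) \<le> max B 0" for p using B by (meson max.coboundedI1)
    show "norm (f p - f q) \<le> max L 0 * dist p q" for p q
      by (meson L max.cobounded1 mult_right_mono order_trans zero_le_dist)
  qed auto
qed

lemma bounded_lipschitz_const: "bounded_lipschitz (\<lambda>p. c)"
  by (rule bounded_lipschitzI[of _ "norm c" 0]) auto

lemma bounded_lipschitz_add:
  assumes "bounded_lipschitz f" "bounded_lipschitz g"
  shows "bounded_lipschitz (\<lambda>p. f p + g p)"
proof -
  obtain B1 L1 B2 L2 where f: "\<And>p. norm (f p) \<le> B1" "\<And>p q. norm (f p - f q) \<le> L1 * dist p q"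
    and g: "\<And>p. norm (g p) \<le> B2" "\<And>p q. norm (g p - g q) \<le> L2 * dist p q"
    using assms by (metis bounded_lipschitzE)
  show ?thesis
  proof (rule bounded_lipschitzI[of _ "B1 + B2" "L1 + L2"])
    show "norm (f p + g p) \<le> B1 + B2" for p
      by (rule order.trans[OF norm_triangle_ineq add_mono[OF f(1) g(1)]])
    have "norm (f p + g p - (f q + g q)) \<le> norm (f p - f q) + norm (g p - g q)" for p q
      by (metis add_diff_add norm_triangle_ineq)
    then show "norm (f p + g p - (f q + g q)) \<le> (L1 + L2) * dist p q" for p q
      unfolding distrib_right using f(2)[of p q] g(2)[of p q] by (meson add_mono order_trans)
  qed
qed

lemma bounded_lipschitz_minus: "bounded_lipschitz f \<Longrightarrow> bounded_lipschitz (\<lambda>p. - f p)"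
  unfolding bounded_lipschitz_def by (simp add: norm_minus_commute)

lemma bounded_lipschitz_diff:
  "bounded_lipschitz f \<Longrightarrow> bounded_lipschitz g \<Longrightarrow> bounded_lipschitz (\<lambda>p. f p - g p)"
  using bounded_lipschitz_add[of f "\<lambda>p. - g p"] bounded_lipschitz_minus[of g] by simp

lemma bounded_lipschitz_bilinear:
  assumes bb: "bounded_bilinear bil" and "bounded_lipschitz f" "bounded_lipschitz g"
  shows "bounded_lipschitz (\<lambda>p. bil (f p) (g p))"
proof -
  obtain B1 L1 B2 L2 where
    f: "B1 \<ge> 0" "L1 \<ge> 0" "\<And>p. norm (f p) \<le> B1" "\<And>p q. norm (f p - f q) \<le> L1 * dist p q" and
    g: "B2 \<ge> 0" "L2 \<ge> 0" "\<And>p. norm (g p) \<le> B2" "\<And>p q. norm (g p - g q) \<le> L2 * dist p q"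
    using assms(2,3) by (metis bounded_lipschitzE)
  obtain K where K: "K > 0" "\<And>a b. norm (bil a b) \<le> norm a * norm b * K"
    using bounded_bilinear.pos_bounded[OF bb] by blast
  show ?thesis
  proof (rule bounded_lipschitzI[of _ "B1 * B2 * K" "(L1 * B2 + B1 * L2) * K"])
    fix p
    have "norm (bil (f p) (g p)) \<le> norm (f p) * norm (g p) * K" by (rule K(2))
    also have "\<dots> \<le> B1 * B2 * K" using f g K by (intro mult_right_mono mult_mono) auto
    finally show "norm (bil (f p) (g p)) \<le> B1 * B2 * K" .
  next
    fix p q
    have "bil (f p) (g p) - bil (f q) (g q) = bil (f p - f q) (g p) + bil (f q) (g p - g q)"
      by (simp add: bounded_bilinear.diff_left[OF bb] bounded_bilinear.diff_right[OF bb])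
    then have "norm (bil (f p) (g p) - bil (f q) (g q))
        \<le> norm (bil (f p - f q) (g p)) + norm (bil (f q) (g p - g q))"
      by (simp add: norm_triangle_ineq)
    also have "\<dots> \<le> norm (f p - f q) * norm (g p) * K + norm (f q) * norm (g p - g q) * K"
      by (rule add_mono[OF K(2) K(2)])
    also have "\<dots> \<le> (L1 * dist p q) * B2 * K + B1 * (L2 * dist p q) * K"
      using f g K by (intro add_mono mult_right_mono mult_mono) auto
    finally show "norm (bil (f p) (g p) - bil (f q) (g q)) \<le> (L1 * B2 + B1 * L2) * K * dist p q"
      by (simp add: algebra_simps)
  qed
qed

lemma bounded_lipschitz_cross3:
  "bounded_lipschitz f \<Longrightarrow> bounded_lipschitz g \<Longrightarrow> bounded_lipschitz (\<lambda>p. f p \<times> g p)"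
  by (rule bounded_lipschitz_bilinear[OF bounded_bilinear_cross3])

lemma bounded_lipschitz_scaleR:
  "bounded_lipschitz f \<Longrightarrow> bounded_lipschitz g \<Longrightarrow> bounded_lipschitz (\<lambda>p. f p *\<^sub>R g p)"
  by (rule bounded_lipschitz_bilinear[OF bounded_bilinear_scaleR])

lemma bounded_lipschitz_inner:
  "bounded_lipschitz f \<Longrightarrow> bounded_lipschitz g \<Longrightarrow> bounded_lipschitz (\<lambda>p. f p \<bullet> g p)"
  by (rule bounded_lipschitz_bilinear[OF bounded_bilinear_inner])

lemma bounded_lipschitz_mult:
  "bounded_lipschitz f \<Longrightarrow> bounded_lipschitz g \<Longrightarrow> bounded_lipschitz (\<lambda>p. (f p :: real) * g p)"
  by (rule bounded_lipschitz_bilinear[OF bounded_bilinear_mult])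

lemma bounded_lipschitz_Pair:
  assumes "bounded_lipschitz f" "bounded_lipschitz g"
  shows "bounded_lipschitz (\<lambda>p. (f p, g p))"
proof -
  obtain B1 L1 B2 L2 where f: "\<And>p. norm (f p) \<le> B1" "\<And>p q. norm (f p - f q) \<le> L1 * dist p q"
    and g: "\<And>p. norm (g p) \<le> B2" "\<And>p q. norm (g p - g q) \<le> L2 * dist p q"
    using assms by (metis bounded_lipschitzE)
  show ?thesis
  proof (rule bounded_lipschitzI[of _ "B1 + B2" "L1 + L2"])
    show "norm (f p, g p) \<le> B1 + B2" for p
      using norm_Pair_le[of "f p" "g p"] f(1)[of p] g(1)[of p] by linarith
    show "norm ((f p, g p) - (f q, g q)) \<le> (L1 + L2) * dist p q" for p q
      using norm_Pair_le[of "f p - f q" "g p - g q"] f(2)[of p q] g(2)[of p q]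
      by (simp add: distrib_right)
  qed
qed

lemma bounded_lipschitz_inverse_max_norm:
  assumes "bounded_lipschitz f" "r > 0"
  shows "bounded_lipschitz (\<lambda>p. 1 / max r (norm (f p)))"
proof -
  obtain L where L: "L \<ge> 0" "\<And>p q. norm (f p - f q) \<le> L * dist p q"
    using assms(1) by (meson bounded_lipschitzE)
  define g where "g p = max r (norm (f p))" for p
  have g: "g p \<ge> r" "\<bar>g p - g q\<bar> \<le> L * dist p q" for p q
    using norm_triangle_ineq3[of "f p" "f q"] L(2)[of p q] by (auto simp: g_def max_def)
  show ?thesis
    unfolding g_def[symmetric]
  proof (rule bounded_lipschitzI[of _ "1 / r" "L / r\<^sup>2"])
    show "norm (1 / g p) \<le> 1 / r" for p
      using assms(2) g(1)[of p] by (simp add: frac_le)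
    fix p q
    have "norm (1 / g p - 1 / g q) = \<bar>g q - g p\<bar> / (g p * g q)"
      using g(1)[of p] g(1)[of q] assms(2) by (simp add: field_simps abs_div)
    also have "\<dots> \<le> \<bar>g q - g p\<bar> / r\<^sup>2"
      using g(1)[of p] g(1)[of q] assms(2)
      by (intro divide_left_mono) (auto simp: power2_eq_square intro: mult_mono)
    also have "\<dots> \<le> L / r\<^sup>2 * dist p q"
      using g(2)[of q p] by (simp add: divide_right_mono dist_commute)
    finally show "norm (1 / g p - 1 / g q) \<le> L / r\<^sup>2 * dist p q" .
  qed
qed

lemma bounded_lipschitz_closest_point_cball:
  fixes h :: "'p::metric_space \<Rightarrow> 'a::{real_inner,heine_borel}"
  assumes h: "\<And>p q. dist (h p) (h q) \<le> dist p q" and R: "R \<ge> 0"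
  shows "bounded_lipschitz (\<lambda>p. closest_point (cball 0 R) (h p))"
proof (rule bounded_lipschitzI[of _ R 1])
  have ne: "cball (0::'a) R \<noteq> {}" using R by auto
  show "norm (closest_point (cball 0 R) (h p)) \<le> R" for p
    using closest_point_in_set[OF closed_cball ne, of "h p"] by simp
  show "norm (closest_point (cball 0 R) (h p) - closest_point (cball 0 R) (h q)) \<le> 1 * dist p q"
    for p q using closest_point_lipschitz[OF convex_cball closed_cball ne, of "h p" "h q"] h[of p q]
    by (simp add: dist_norm)
qed

text \<open>Replacing \<open>1 / |x|\<close> by an independent variable \<open>i\<close> makes the controlled field a polynomial
  in \<open>(i, x, v)\<close>.\<close>

definition lrl_inv_norm :: "real \<Rightarrow> real \<Rightarrow> vec3 \<Rightarrow> vec3 \<Rightarrow> vec3" where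
  "lrl_inv_norm \<mu> i x v = v \<times> (x \<times> v) - (\<mu> * i) *\<^sub>R x"

definition ctrl_x_inv_norm :: "real \<Rightarrow> real \<Rightarrow> real \<Rightarrow> vec3 \<Rightarrow> vec3 \<Rightarrow> real \<Rightarrow> vec3 \<Rightarrow> vec3 \<Rightarrow> vec3" where
  "ctrl_x_inv_norm \<mu> k1 k2 L0 A0 i x v =
     v - k1 *\<^sub>R (v \<times> (x \<times> v - L0))
       - k2 *\<^sub>R (v \<times> ((lrl_inv_norm \<mu> i x v - A0) \<times> v) - (\<mu> * i) *\<^sub>R (lrl_inv_norm \<mu> i x v - A0)
                 + (\<mu> * (i * (i * i))) *\<^sub>R ((x \<bullet> (lrl_inv_norm \<mu> i x v - A0)) *\<^sub>R x))"

definition ctrl_v_inv_norm :: "real \<Rightarrow> real \<Rightarrow> real \<Rightarrow> vec3 \<Rightarrow> vec3 \<Rightarrow> real \<Rightarrow> vec3 \<Rightarrow> vec3 \<Rightarrow> vec3" where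
  "ctrl_v_inv_norm \<mu> k1 k2 L0 A0 i x v =
     - (\<mu> * (i * (i * i))) *\<^sub>R x - k1 *\<^sub>R ((x \<times> v - L0) \<times> x)
       - k2 *\<^sub>R ((x \<times> v) \<times> (lrl_inv_norm \<mu> i x v - A0) + x \<times> (v \<times> (lrl_inv_norm \<mu> i x v - A0)))"

lemma ctrl_eq_inv_norm:
  "ctrl_x \<mu> k1 k2 L0 A0 x v = ctrl_x_inv_norm \<mu> k1 k2 L0 A0 (1 / norm x) x v"
  "ctrl_v \<mu> k1 k2 L0 A0 x v = ctrl_v_inv_norm \<mu> k1 k2 L0 A0 (1 / norm x) x v"
proof -
  have "\<mu> / norm x = \<mu> * (1 / norm x)"
    "\<mu> / norm x ^ 3 = \<mu> * (1 / norm x * (1 / norm x * (1 / norm x)))"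
    by (simp_all add: power3_eq_cube)
  then show "ctrl_x \<mu> k1 k2 L0 A0 x v = ctrl_x_inv_norm \<mu> k1 k2 L0 A0 (1 / norm x) x v"
    "ctrl_v \<mu> k1 k2 L0 A0 x v = ctrl_v_inv_norm \<mu> k1 k2 L0 A0 (1 / norm x) x v"
    unfolding ctrl_x_def ctrl_x_inv_norm_def ctrl_v_def ctrl_v_inv_norm_def lrl_inv_norm_def
      Let_def angmom_def lrl_def
    by (simp_all only:)
qed

text \<open>Projecting both arguments onto the ball of radius \<open>R\<close> and cutting \<open>1 / |x|\<close> off at \<open>1 / \<rho>\<close> gives
  a bounded, globally Lipschitz field that agrees with the controlled one on \<open>\<rho> \<le> |x| \<le> R, |v| \<le> R\<close>.\<close>

definition clamped_ctrl_field ::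
  "real \<Rightarrow> real \<Rightarrow> real \<Rightarrow> vec3 \<Rightarrow> vec3 \<Rightarrow> real \<Rightarrow> real \<Rightarrow> vec3 \<times> vec3 \<Rightarrow> vec3 \<times> vec3" where
  "clamped_ctrl_field \<mu> k1 k2 L0 A0 \<rho> R p =
     (let x = closest_point (cball 0 R) (fst p); v = closest_point (cball 0 R) (snd p);
          i = 1 / max \<rho> (norm x)
      in (ctrl_x_inv_norm \<mu> k1 k2 L0 A0 i x v, ctrl_v_inv_norm \<mu> k1 k2 L0 A0 i x v))"

lemma bounded_lipschitz_clamped_ctrl_field:
  assumes \<rho>: "\<rho> > 0" and R: "R \<ge> 0"
  shows "bounded_lipschitz (clamped_ctrl_field \<mu> k1 k2 L0 A0 \<rho> R)"
proof -
  have x: "bounded_lipschitz (\<lambda>p::vec3 \<times> vec3. closest_point (cball 0 R) (fst p))"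
    by (rule bounded_lipschitz_closest_point_cball[OF dist_fst_le R])
  have v: "bounded_lipschitz (\<lambda>p::vec3 \<times> vec3. closest_point (cball 0 R) (snd p))"
    by (rule bounded_lipschitz_closest_point_cball[OF dist_snd_le R])
  have i: "bounded_lipschitz (\<lambda>p::vec3 \<times> vec3. 1 / max \<rho> (norm (closest_point (cball 0 R) (fst p))))"
    by (rule bounded_lipschitz_inverse_max_norm[OF x \<rho>])
  show ?thesis
    unfolding clamped_ctrl_field_def[abs_def] ctrl_x_inv_norm_def ctrl_v_inv_norm_def
      lrl_inv_norm_def Let_def
    using x v i by (intro bounded_lipschitz_Pair bounded_lipschitz_add bounded_lipschitz_diff
        bounded_lipschitz_minus bounded_lipschitz_cross3 bounded_lipschitz_scaleR
        bounded_lipschitz_inner bounded_lipschitz_mult bounded_lipschitz_const)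
qed

lemma clamped_ctrl_field_eq:
  assumes "\<rho> \<le> norm (fst p)" "\<rho> > 0" "norm (fst p) \<le> R" "norm (snd p) \<le> R"
  shows "clamped_ctrl_field \<mu> k1 k2 L0 A0 \<rho> R p = ctrl_field \<mu> k1 k2 L0 A0 p"
proof -
  have "closest_point (cball 0 R) (fst p) = fst p" "closest_point (cball 0 R) (snd p) = snd p"
    using assms(3,4) by (auto intro: closest_point_self)
  moreover have "max \<rho> (norm (fst p)) = norm (fst p)" using assms(1) by simp
  ultimately show ?thesis
    unfolding clamped_ctrl_field_def ctrl_field_def by (simp add: ctrl_eq_inv_norm Let_def)
qed

lemma ctrl_sol_of_field_solution:
  assumes "I \<subseteq> J" and y': "\<And>t. t \<in> J \<Longrightarrow> (y has_vector_derivative F (y t)) (at t within J)"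
    and "\<And>t. t \<in> I \<Longrightarrow> F (y t) = ctrl_field \<mu> k1 k2 L0 A0 (y t) \<and> fst (y t) \<noteq> 0"
  shows "ctrl_sol \<mu> k1 k2 L0 A0 I (\<lambda>t. fst (y t)) (\<lambda>t. snd (y t))"
  unfolding ctrl_sol_def
proof
  fix t assume t: "t \<in> I"
  then have "t \<in> J" using assms(1) by auto
  from has_vector_derivative_within_subset[OF y'[OF this] assms(1)]
  have "(y has_vector_derivative ctrl_field \<mu> k1 k2 L0 A0 (y t)) (at t within I)"
    using assms(3)[OF t] by simp
  then show "fst (y t) \<noteq> 0
      \<and> ((\<lambda>t. fst (y t)) has_vector_derivative ctrl_x \<mu> k1 k2 L0 A0 (fst (y t)) (snd (y t)))
          (at t within I)
      \<and> ((\<lambda>t. snd (y t)) has_vector_derivative ctrl_v \<mu> k1 k2 L0 A0 (fst (y t)) (snd (y t)))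
          (at t within I)"
    unfolding ctrl_field_def using assms(3)[OF t]
      bounded_linear.has_vector_derivative[OF bounded_linear_fst]
      bounded_linear.has_vector_derivative[OF bounded_linear_snd] by fastforce
qed

text \<open>At the first exit time from \<open>U\<close> the path would still lie in \<open>K \<subseteq> U\<close>.\<close>

lemma continuous_path_trapped:
  fixes y :: "real \<Rightarrow> 'a::topological_space"
  assumes y: "continuous_on {0..} y" and K: "closed K" and U: "open U" "K \<subseteq> U" and y0: "y 0 \<in> K"
    and trap: "\<And>T. T > 0 \<Longrightarrow> \<forall>t\<in>{0..<T}. y t \<in> U \<Longrightarrow> \<forall>t\<in>{0..<T}. y t \<in> K"
    and t: "t \<ge> 0"
  shows "y t \<in> K"
proof -
  define A where "A = {t. t \<ge> 0 \<and> y t \<notin> U}"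
  have "A = {}"
  proof (rule ccontr)
    assume "A \<noteq> {}"
    moreover have bdd: "bdd_below A" by (rule bdd_belowI[of _ 0]) (auto simp: A_def)
    moreover have "A = {0..} \<inter> y -` (- U)" by (auto simp: A_def)
    then have "closed A"
      using continuous_closed_preimage[OF y closed_atLeast, of "- U"] U(1) by (simp add: closed_Compl)
    ultimately have "Inf A \<in> A" by (rule closed_contains_Inf)
    then have exit: "y (Inf A) \<notin> U" and "Inf A \<ge> 0" by (auto simp: A_def)
    then have pos: "Inf A > 0" using y0 U(2) by (cases "Inf A = 0") auto
    have "y t \<in> U" if "t \<in> {0..<Inf A}" for t
    proof (rule ccontr)
      assume "y t \<notin> U"
      then have "t \<in> A" using that by (simp add: A_def)
      then show False using cInf_lower[OF _ bdd, of t] that by simp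
    qed
    then have "y ` {0..<Inf A} \<subseteq> K" using trap[OF pos] by blast
    moreover have "continuous_on (closure {0..<Inf A}) y"
      using pos by (intro continuous_on_subset[OF y]) auto
    ultimately have "y ` closure {0..<Inf A} \<subseteq> K"
      using K by (intro image_closure_subset) auto
    then have "y (Inf A) \<in> K" using pos by auto
    then show False using exit U(2) by auto
  qed
  then have "\<forall>s\<in>{0..<t + 1}. y s \<in> U" by (auto simp: A_def)
  then show ?thesis
    using trap[of "t + 1"] t by simp
qed

context kepler_control
begin

lemma ctrl_sol_exists:
  assumes "y0 \<noteq> 0" and "lyapV \<mu> k1 k2 L0 A0 y0 w0 \<le> c"
  obtains x v where "ctrl_sol \<mu> k1 k2 L0 A0 {0..} x v" "x 0 = y0" "v 0 = w0"
proof -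
  define \<rho> R where "\<rho> = radius_min / 2" and "R = max radius_max speed_max + 1"
  define F where "F = clamped_ctrl_field \<mu> k1 k2 L0 A0 \<rho> R"
  define U where "U = {p :: vec3 \<times> vec3. \<rho> < norm (fst p) \<and> norm (fst p) < R \<and> norm (snd p) < R}"
  have \<rho>: "\<rho> > 0" using radius_min_pos by (simp add: \<rho>_def)
  have "speed_max > 0" using angmom_min_pos mu by (simp add: speed_max_def)
  then have R: "R \<ge> 0" using max.cobounded2[of speed_max radius_max] by (simp add: R_def)
  have sublevel_U: "sublevel \<subseteq> U"
    using sublevel_bounds radius_min_pos by (fastforce simp: sublevel_def U_def \<rho>_def R_def)
  have F_U: "F p = ctrl_field \<mu> k1 k2 L0 A0 p \<and> fst p \<noteq> 0" if "p \<in> U" for p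
    using clamped_ctrl_field_eq[OF _ \<rho>] that \<rho> by (auto simp: F_def U_def)
  obtain B Lc where Lc: "Lc \<ge> 0" and F_bound: "\<And>p. norm (F p) \<le> B"
    and F_lip: "\<And>p q. norm (F p - F q) \<le> Lc * dist p q"
    using bounded_lipschitz_clamped_ctrl_field[OF \<rho> R] unfolding F_def by (metis bounded_lipschitzE)
  have F_lip': "norm (F p - F q) \<le> (Lc + 1) * norm (p - q)" for p q
    using F_lip[of p q] mult_right_mono[of Lc "Lc + 1" "norm (p - q)"] by (simp add: dist_norm)
  have "Lc + 1 > 0" using Lc by simp
  then obtain y where y0: "y 0 = (y0, w0)"
    and y': "\<And>t. t \<ge> 0 \<Longrightarrow> (y has_vector_derivative F (y t)) (at t within {0..})"
    using bounded_lipschitz_ode_global_solution[OF F_lip' F_bound] by blast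
  have sol: "ctrl_sol \<mu> k1 k2 L0 A0 I (\<lambda>t. fst (y t)) (\<lambda>t. snd (y t))"
    if "I \<subseteq> {0..}" "\<forall>t\<in>I. y t \<in> U" for I
    using that F_U by (intro ctrl_sol_of_field_solution[OF _ y']) auto
  have "y t \<in> sublevel" if "t \<ge> 0" for t
  proof (rule continuous_path_trapped[OF _ compact_imp_closed[OF compact_sublevel] _ sublevel_U _ _
        that])
    show "continuous_on {0..} y"
      using y' by (intro continuous_on_vector_derivative) auto
    show "open U"
      unfolding U_def by (intro open_Collect_conj open_Collect_less continuous_intros)
    show "y 0 \<in> sublevel"
      using assms y0 by (simp add: sublevel_def)
    show "\<forall>t\<in>{0..<T}. y t \<in> sublevel" if "T > 0" "\<forall>t\<in>{0..<T}. y t \<in> U" for T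
    proof
      fix t assume "t \<in> {0..<T}"
      have solT: "ctrl_sol \<mu> k1 k2 L0 A0 {0..<T} (\<lambda>t. fst (y t)) (\<lambda>t. snd (y t))"
        by (rule sol) (use that(2) in auto)
      have "is_interval {0..<T}" unfolding is_interval_1 by auto
      from ctrl_sol_in_sublevel[OF this _ _ solT _ \<open>t \<in> {0..<T}\<close>]
      show "y t \<in> sublevel" using that(1) assms y0 by fastforce
    qed
  qed
  then have "ctrl_sol \<mu> k1 k2 L0 A0 {0..} (\<lambda>t. fst (y t)) (\<lambda>t. snd (y t))"
    using sol sublevel_U by auto
  then show ?thesis using that y0 by simp
qed

end


theorem theorem6:
  fixes \<mu> k1 k2 c :: real and x0 v0 :: vec3
  assumes "\<mu> > 0" and "k1 > 0" and "k2 > 0"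
    and "x0 \<noteq> 0"
    and "angmom x0 v0 \<noteq> 0"
    and "norm (lrl \<mu> x0 v0) < \<mu>"
    and "0 < c"
    and "c < min (k1 * (norm (angmom x0 v0))\<^sup>2 / 2) (k2 * (\<mu> - norm (lrl \<mu> x0 v0))\<^sup>2 / 2)"
  shows
    \<comment> \<open>every trajectory starting in V^{-1}([0,c]) exists for all t \<ge> 0\<close>
    "(\<forall>y0 w0. y0 \<noteq> 0 \<and> lyapV \<mu> k1 k2 (angmom x0 v0) (lrl \<mu> x0 v0) y0 w0 \<le> c \<longrightarrow>
        (\<exists>x v. ctrl_sol \<mu> k1 k2 (angmom x0 v0) (lrl \<mu> x0 v0) {0..} x v \<and> x 0 = y0 \<and> v 0 = w0))
   \<and> \<comment> \<open>it stays in V^{-1}([0,c]) and converges to V^{-1}(0)\<close>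
    (\<forall>I x v. is_interval I \<and> 0 \<in> I \<and> I \<subseteq> {0..}
        \<and> ctrl_sol \<mu> k1 k2 (angmom x0 v0) (lrl \<mu> x0 v0) I x v
        \<and> lyapV \<mu> k1 k2 (angmom x0 v0) (lrl \<mu> x0 v0) (x 0) (v 0) \<le> c \<longrightarrow>
        (\<forall>t\<in>I. lyapV \<mu> k1 k2 (angmom x0 v0) (lrl \<mu> x0 v0) (x t) (v t) \<le> c)
        \<and> (I = {0..} \<longrightarrow>
             ((\<lambda>t. infdist (x t, v t) (target_set \<mu> (angmom x0 v0) (lrl \<mu> x0 v0))) \<longlongrightarrow> 0) at_top))
   \<and> \<comment> \<open>V^{-1}(0) is forward invariant under the controlled system\<close>
    (\<forall>I x v. is_interval I \<and> 0 \<in> I \<and> I \<subseteq> {0..}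
        \<and> ctrl_sol \<mu> k1 k2 (angmom x0 v0) (lrl \<mu> x0 v0) I x v
        \<and> (x 0, v 0) \<in> target_set \<mu> (angmom x0 v0) (lrl \<mu> x0 v0) \<longrightarrow>
        (\<forall>t\<in>I. (x t, v t) \<in> target_set \<mu> (angmom x0 v0) (lrl \<mu> x0 v0)))
   \<and> \<comment> \<open>V^{-1}(0) is forward invariant under the Kepler system\<close>
    (\<forall>I x v. is_interval I \<and> 0 \<in> I \<and> I \<subseteq> {0..}
        \<and> kepler_sol \<mu> I x v
        \<and> (x 0, v 0) \<in> target_set \<mu> (angmom x0 v0) (lrl \<mu> x0 v0) \<longrightarrow>
        (\<forall>t\<in>I. (x t, v t) \<in> target_set \<mu> (angmom x0 v0) (lrl \<mu> x0 v0)))"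
proof -
  define L0 A0 where "L0 = angmom x0 v0" and "A0 = lrl \<mu> x0 v0"
  interpret kepler_control \<mu> k1 k2 c L0 A0
    using assms angmom_inner_lrl[of x0 v0 \<mu>] by unfold_locales (auto simp: L0_def A0_def)
  show ?thesis
    unfolding L0_def[symmetric] A0_def[symmetric]
  proof (intro conjI allI impI ballI)
    show "\<exists>x v. ctrl_sol \<mu> k1 k2 L0 A0 {0..} x v \<and> x 0 = y0 \<and> v 0 = w0"
      if "y0 \<noteq> 0 \<and> lyapV \<mu> k1 k2 L0 A0 y0 w0 \<le> c" for y0 w0
      using that by (metis ctrl_sol_exists)
  qed (use ctrl_sol_in_sublevel ctrl_sol_tendsto_target_set ctrl_sol_target_set_invariant[OF k1 k2]
        kepler_sol_target_set_invariant in \<open>auto simp: sublevel_def\<close>)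
qed

end
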